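(* Let $\Gamma$ be an oriented Jordan smooth curve, $\alpha$ a diffeomorphism of $\Gamma$ onto itself with a nonempty set of periodic points, $X(\Gamma)$ a rearrangement-invariant space with Boyd indices $\alpha_X,\beta_X$, and $a,b\in C(\Gamma)$. Then for every $i\in\{0,1\}$ and every $k\in\mathbb Z$, $\eta_i^-(t)=\eta_i^-[\alpha_k(t)]$ and $\eta_i^+(t)=\eta_i^+[\alpha_k(t)]$ for all $t\in\Gamma$; hence the sets $\Gamma_j$, $j\in\{1,\dots,5\}$, are $\alpha_k$-invariant.
   Context: $\alpha_n$ are iterates of $\alpha$ ($n\in\mathbb Z$). $m$ is the common multiplicity of periodic points if $\alpha$ preserves orientation, $m=2$ if it changes orientation; $\Phi=\overline{\{t:\alpha_m(t)\ne t\}}$; $f_m(t)=\prod_{i=0}^{m-1}f[\alpha_i(t)]$. $\eta_0(t)=|a_m(t)|-|b_m(t)|\min\{|\alpha_m'(t)|^{-\alpha_X},|\alpha_m'(t)|^{-\beta_X}\}$, $\eta_1(t)=|a_m(t)|-|b_m(t)|\max\{|\alpha_m'(t)|^{-\alpha_X},|\alpha_m'(t)|^{-\beta_X}\}$, $\eta_i^\pm(t)=\lim_{n\to\pm\infty}\eta_i[\alpha_{mn}(t)]$. $\Gamma_1=\Gamma\setminus\Phi$, $\Gamma_2=\{t\in\Phi:\eta_1^-(t)>0,\eta_1^+(t)>0\}$, $\Gamma_3=\{t\in\Phi:\eta_0^-(t)<0,\eta_0^+(t)<0\}$, $\Gamma_4=\{t\in\Phi:\eta_0^+(t)<0<\eta_1^-(t)\}$,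 $\Gamma_5=\{t\in\Phi:\eta_0^-(t)<0<\eta_1^+(t)\}$. *)

theory Defs
  imports "HOL-Analysis.Analysis"
begin

text \<open>The
orientation is the one induced by the parametrisation.\<close>

definition smooth_jordan_curve :: "(real \<Rightarrow> complex) \<Rightarrow> bool" where
  "smooth_jordan_curve \<gamma> \<longleftrightarrow> simple_path \<gamma> \<and>
     (\<exists>\<gamma>'. continuous_on {0..1} \<gamma>' \<and>
        (\<forall>s\<in>{0..1}. (\<gamma> has_vector_derivative \<gamma>' s) (at s within {0..1}) \<and> \<gamma>' s \<noteq> 0) \<and>
        (pathfinish \<gamma> = pathstart \<gamma> \<longrightarrow> (\<exists>c>0. \<gamma>' 1 = complex_of_real c * \<gamma>' 0)))"

definition curve_deriv :: "complex set \<Rightarrow> (complex \<Rightarrow> complex) \<Rightarrow> complex \<Rightarrow> complex" where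
  "curve_deriv \<Gamma> f t = (THE D. (f has_field_derivative D) (at t within \<Gamma>))"

definition curve_diff1 :: "complex set \<Rightarrow> (complex \<Rightarrow> complex) \<Rightarrow> bool" where
  "curve_diff1 \<Gamma> f \<longleftrightarrow>
     (\<forall>t\<in>\<Gamma>. (f has_field_derivative curve_deriv \<Gamma> f t) (at t within \<Gamma>) \<and> curve_deriv \<Gamma> f t \<noteq> 0)
     \<and> continuous_on \<Gamma> (curve_deriv \<Gamma> f)"

definition curve_diffeo :: "complex set \<Rightarrow> (complex \<Rightarrow> complex) \<Rightarrow> bool" where
  "curve_diffeo \<Gamma> \<alpha> \<longleftrightarrow> bij_betw \<alpha> \<Gamma> \<Gamma> \<and> curve_diff1 \<Gamma> \<alpha> \<and> curve_diff1 \<Gamma> (inv_into \<Gamma> \<alpha>)"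

definition iter :: "complex set \<Rightarrow> (complex \<Rightarrow> complex) \<Rightarrow> int \<Rightarrow> complex \<Rightarrow> complex" where
  "iter \<Gamma> \<alpha> n = (if n \<ge> 0 then \<alpha> ^^ nat n else inv_into \<Gamma> \<alpha> ^^ nat (- n))"

definition periodic_point :: "complex set \<Rightarrow> (complex \<Rightarrow> complex) \<Rightarrow> complex \<Rightarrow> bool" where
  "periodic_point \<Gamma> \<alpha> t \<longleftrightarrow> t \<in> \<Gamma> \<and> (\<exists>n::nat. n > 0 \<and> (\<alpha> ^^ n) t = t)"

definition param :: "(real \<Rightarrow> complex) \<Rightarrow> complex \<Rightarrow> real" where
  "param \<gamma> x = inv_into (if pathfinish \<gamma> = pathstart \<gamma> then {0..<1} else {0..1}) \<gamma> x"

definition cyc_pos :: "real \<Rightarrow> real \<Rightarrow> real \<Rightarrow> bool" where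
  "cyc_pos x y z \<longleftrightarrow> (x < y \<and> y < z) \<or> (y < z \<and> z < x) \<or> (z < x \<and> x < y)"

definition orient_pres :: "(real \<Rightarrow> complex) \<Rightarrow> (complex \<Rightarrow> complex) \<Rightarrow> bool" where
  "orient_pres \<gamma> \<alpha> \<longleftrightarrow> (\<forall>x\<in>path_image \<gamma>. \<forall>y\<in>path_image \<gamma>. \<forall>z\<in>path_image \<gamma>.
      cyc_pos (param \<gamma> x) (param \<gamma> y) (param \<gamma> z) \<longrightarrow>
      cyc_pos (param \<gamma> (\<alpha> x)) (param \<gamma> (\<alpha> y)) (param \<gamma> (\<alpha> z)))"

definition mult :: "(real \<Rightarrow> complex) \<Rightarrow> (complex \<Rightarrow> complex) \<Rightarrow> nat" where
  "mult \<gamma> \<alpha> = (if orient_pres \<gamma> \<alpha>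
      then (LEAST n::nat. n > 0 \<and> (\<exists>t\<in>path_image \<gamma>. (\<alpha> ^^ n) t = t)) else 2)"

definition fm :: "(real \<Rightarrow> complex) \<Rightarrow> (complex \<Rightarrow> complex) \<Rightarrow> (complex \<Rightarrow> complex) \<Rightarrow> complex \<Rightarrow> complex" where
  "fm \<gamma> \<alpha> f t = (\<Prod>i<mult \<gamma> \<alpha>. f (iter (path_image \<gamma>) \<alpha> (int i) t))"

definition Phi :: "(real \<Rightarrow> complex) \<Rightarrow> (complex \<Rightarrow> complex) \<Rightarrow> complex set" where
  "Phi \<gamma> \<alpha> = closure {t \<in> path_image \<gamma>. iter (path_image \<gamma>) \<alpha> (int (mult \<gamma> \<alpha>)) t \<noteq> t}"

text \<open>\<open>eta \<gamma> \<alpha> a b aX bX 0\<close> is \<open>\<eta>_0\<close>, \<open>eta \<dots> 1\<close> is \<open>\<eta>_1\<close>; \<open>aX, bX\<close> are the Boyd indices.\<close>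

definition eta :: "(real \<Rightarrow> complex) \<Rightarrow> (complex \<Rightarrow> complex) \<Rightarrow> (complex \<Rightarrow> complex) \<Rightarrow> (complex \<Rightarrow> complex)
    \<Rightarrow> real \<Rightarrow> real \<Rightarrow> nat \<Rightarrow> complex \<Rightarrow> real" where
  "eta \<gamma> \<alpha> a b aX bX i t =
     (let D = norm (curve_deriv (path_image \<gamma>) (iter (path_image \<gamma>) \<alpha> (int (mult \<gamma> \<alpha>))) t)
      in norm (fm \<gamma> \<alpha> a t) - norm (fm \<gamma> \<alpha> b t) *
           (if i = 0 then min (D powr (- aX)) (D powr (- bX)) else max (D powr (- aX)) (D powr (- bX))))"

definition eta_minus :: "(real \<Rightarrow> complex) \<Rightarrow> (complex \<Rightarrow> complex) \<Rightarrow> (complex \<Rightarrow> complex) \<Rightarrow> (complex \<Rightarrow> complex)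
    \<Rightarrow> real \<Rightarrow> real \<Rightarrow> nat \<Rightarrow> complex \<Rightarrow> real" where
  "eta_minus \<gamma> \<alpha> a b aX bX i t =
     Lim at_bot (\<lambda>n::int. eta \<gamma> \<alpha> a b aX bX i (iter (path_image \<gamma>) \<alpha> (int (mult \<gamma> \<alpha>) * n) t))"

definition eta_plus :: "(real \<Rightarrow> complex) \<Rightarrow> (complex \<Rightarrow> complex) \<Rightarrow> (complex \<Rightarrow> complex) \<Rightarrow> (complex \<Rightarrow> complex)
    \<Rightarrow> real \<Rightarrow> real \<Rightarrow> nat \<Rightarrow> complex \<Rightarrow> real" where
  "eta_plus \<gamma> \<alpha> a b aX bX i t =
     Lim at_top (\<lambda>n::int. eta \<gamma> \<alpha> a b aX bX i (iter (path_image \<gamma>) \<alpha> (int (mult \<gamma> \<alpha>) * n) t))"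

definition Gamma_set :: "(real \<Rightarrow> complex) \<Rightarrow> (complex \<Rightarrow> complex) \<Rightarrow> (complex \<Rightarrow> complex) \<Rightarrow> (complex \<Rightarrow> complex)
    \<Rightarrow> real \<Rightarrow> real \<Rightarrow> nat \<Rightarrow> complex set" where
  "Gamma_set \<gamma> \<alpha> a b aX bX j =
     (let \<Phi> = Phi \<gamma> \<alpha>;
          em = eta_minus \<gamma> \<alpha> a b aX bX; ep = eta_plus \<gamma> \<alpha> a b aX bX
      in if j = 1 then path_image \<gamma> - \<Phi>
         else if j = 2 then {t \<in> \<Phi>. em 1 t > 0 \<and> ep 1 t > 0}
         else if j = 3 then {t \<in> \<Phi>. em 0 t < 0 \<and> ep 0 t < 0}
         else if j = 4 then {t \<in> \<Phi>. ep 0 t < 0 \<and> 0 < em 1 t}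
         else if j = 5 then {t \<in> \<Phi>. em 0 t < 0 \<and> 0 < ep 1 t}
         else {})"

end

theory Submission
  imports Defs
begin

text \<open>The functions \<open>\<eta>_i\<close> are continuous on \<open>\<Gamma>\<close>, and at a fixed point \<open>L\<close> of \<open>\<alpha>_m\<close> they are
  \<open>\<alpha>\<close>-invariant, because along an \<open>\<alpha>_m\<close>-periodic orbit the products defining \<open>a_m\<close>, \<open>b_m\<close>
  and \<open>\<alpha>_m'\<close> are only shifted cyclically. The choice of \<open>m\<close> makes \<open>\<alpha>_m\<close> an orientation
  preserving homeomorphism of \<open>\<Gamma>\<close> with a fixed point (an orientation reversing homeomorphism
  of a closed curve has a fixed point by the intermediate value theorem). Read in the chart
  of \<open>\<Gamma>\<close> cut at that fixed point, \<open>\<alpha>_m\<close> is monotone, so every forward and backward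
  \<open>\<alpha>_m\<close>-orbit converges to a fixed point \<open>L\<close> of \<open>\<alpha>_m\<close>. As \<open>\<alpha>_k\<close> commutes with \<open>\<alpha>_m\<close>, the
  orbit of \<open>\<alpha>_k(t)\<close> converges to \<open>\<alpha>_k(L)\<close>, so both one-sided limits of \<open>\<eta>_i\<close> at \<open>t\<close> and at
  \<open>\<alpha>_k(t)\<close> equal \<open>\<eta>_i(L)\<close>. The sets \<open>\<Gamma>_j\<close> are defined by these limits and by \<open>\<Phi>\<close>, the
  closure of an \<open>\<alpha>\<close>-invariant set, hence are invariant as well.\<close>

section \<open>Integer iterates of a self-bijection\<close>

locale self_bijection =
  fixes G :: "complex set" and \<alpha> :: "complex \<Rightarrow> complex"
  assumes bij: "bij_betw \<alpha> G G"
begin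

abbreviation "\<iota> \<equiv> inv_into G \<alpha>"

lemma alpha_in: "x \<in> G \<Longrightarrow> \<alpha> x \<in> G"
  by (rule bij_betw_apply[OF bij])

lemma inv_in: "x \<in> G \<Longrightarrow> \<iota> x \<in> G"
  by (rule bij_betw_apply[OF bij_betw_inv_into[OF bij]])

lemma alpha_inv: "x \<in> G \<Longrightarrow> \<alpha> (\<iota> x) = x"
  by (rule bij_betw_inv_into_right[OF bij])

lemma inv_alpha: "x \<in> G \<Longrightarrow> \<iota> (\<alpha> x) = x"
  by (rule bij_betw_inv_into_left[OF bij])

lemma funpow_alpha_in: "x \<in> G \<Longrightarrow> (\<alpha> ^^ n) x \<in> G"
  by (induction n) (auto intro: alpha_in)

lemma funpow_inv_in: "x \<in> G \<Longrightarrow> (\<iota> ^^ n) x \<in> G"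
  by (induction n) (auto intro: inv_in)

lemma iter_in: "x \<in> G \<Longrightarrow> iter G \<alpha> k x \<in> G"
  by (simp add: iter_def funpow_alpha_in funpow_inv_in)

lemma iter_0: "iter G \<alpha> 0 x = x"
  by (simp add: iter_def)

lemma iter_nat: "iter G \<alpha> (int n) = \<alpha> ^^ n"
  by (simp add: iter_def)

lemma iter_neg_nat: "iter G \<alpha> (- int n) = \<iota> ^^ n"
  by (cases "n = 0") (simp_all add: iter_def)

lemma iter_succ:
  assumes "x \<in> G"
  shows "iter G \<alpha> (k + 1) x = \<alpha> (iter G \<alpha> k x)"
proof (cases "k \<ge> 0")
  case True
  then have "nat (k + 1) = Suc (nat k)" by simp
  with True show ?thesis by (simp add: iter_def)
next
  case False
  then have "nat (- k) = Suc (nat (- (k + 1)))" by simp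
  with False show ?thesis
    by (simp add: iter_def alpha_inv funpow_inv_in[OF assms])
qed

lemma iter_pred:
  assumes "x \<in> G"
  shows "iter G \<alpha> (k - 1) x = \<iota> (iter G \<alpha> k x)"
  using iter_succ[OF assms, of "k - 1"] inv_alpha[OF iter_in[OF assms]] by simp

lemma iter_add:
  assumes "x \<in> G"
  shows "iter G \<alpha> a (iter G \<alpha> b x) = iter G \<alpha> (a + b) x"
proof (induction a rule: int_induct[where k = 0])
  case base
  show ?case by (simp add: iter_0)
next
  case (step1 i)
  have "iter G \<alpha> (i + 1) (iter G \<alpha> b x) = \<alpha> (iter G \<alpha> (i + b) x)"
    using iter_succ[OF iter_in[OF assms]] step1(2) by simp
  also have "\<dots> = iter G \<alpha> (i + 1 + b) x"
    using iter_succ[OF assms, of "i + b"] by (simp add: ac_simps)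
  finally show ?case .
next
  case (step2 i)
  have "iter G \<alpha> (i - 1) (iter G \<alpha> b x) = \<iota> (iter G \<alpha> (i + b) x)"
    using iter_pred[OF iter_in[OF assms]] step2(2) by simp
  also have "\<dots> = iter G \<alpha> (i - 1 + b) x"
    using iter_pred[OF assms, of "i + b"] by (simp add: algebra_simps)
  finally show ?case .
qed

lemma iter_commute: "x \<in> G \<Longrightarrow> iter G \<alpha> a (iter G \<alpha> b x) = iter G \<alpha> b (iter G \<alpha> a x)"
  by (simp add: iter_add add.commute)

lemma iter_neg_cancel:
  assumes "x \<in> G"
  shows "iter G \<alpha> (- k) (iter G \<alpha> k x) = x"
proof -
  have "iter G \<alpha> (- k) (iter G \<alpha> k x) = iter G \<alpha> 0 x" by (simp add: iter_add[OF assms])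
  then show ?thesis by (simp add: iter_0)
qed

lemma iter_inj_on: "inj_on (iter G \<alpha> k) G"
  by (rule inj_on_inverseI[where g = "iter G \<alpha> (- k)"]) (rule iter_neg_cancel)

lemma iter_image_invariant:
  assumes "S \<subseteq> G" and "\<And>k x. x \<in> S \<Longrightarrow> iter G \<alpha> k x \<in> S"
  shows "iter G \<alpha> k ` S = S"
proof
  show "iter G \<alpha> k ` S \<subseteq> S" using assms(2) by blast
  show "S \<subseteq> iter G \<alpha> k ` S"
  proof
    fix x assume "x \<in> S"
    then have "x = iter G \<alpha> k (iter G \<alpha> (- k) x)"
      using iter_neg_cancel[of x "- k"] assms(1) by auto
    then show "x \<in> iter G \<alpha> k ` S" using assms(2)[OF \<open>x \<in> S\<close>] by blast
  qed
qed

lemma iter_mult_nonneg: "0 \<le> n \<Longrightarrow> iter G \<alpha> (int m * n) = (\<alpha> ^^ m) ^^ nat n"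
  by (simp add: iter_def funpow_mult nat_mult_distrib zero_le_mult_iff)

lemma iter_mult_nonpos:
  assumes "0 < m" "n \<le> 0"
  shows "iter G \<alpha> (int m * n) = (\<iota> ^^ m) ^^ nat (- n)"
proof (cases "n = 0")
  case False
  then have "int m * n < 0" using assms by (simp add: mult_pos_neg)
  moreover have "nat (- (int m * n)) = m * nat (- n)"
    by (simp add: nat_mult_distrib flip: mult_minus_right)
  ultimately show ?thesis by (simp add: iter_def funpow_mult)
qed (simp add: iter_def)

lemma iter_preserves_fixed_point:
  assumes "\<tau> \<in> G" "(\<alpha> ^^ m) \<tau> = \<tau>"
  shows "(\<alpha> ^^ m) (iter G \<alpha> k \<tau>) = iter G \<alpha> k \<tau>"
  using iter_commute[OF assms(1), of "int m" k] assms(2) by (simp add: iter_nat)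

end

section \<open>Cyclic order, monotone maps and charts\<close>

lemma cyc_pos_asym: "cyc_pos a b c \<Longrightarrow> \<not> cyc_pos c b a"
  unfolding cyc_pos_def by auto

lemma cyc_pos_total: "a \<noteq> b \<Longrightarrow> b \<noteq> c \<Longrightarrow> a \<noteq> c \<Longrightarrow> cyc_pos a b c \<or> cyc_pos c b a"
  unfolding cyc_pos_def by auto

lemma cyc_pos_distinct: "cyc_pos a b c \<Longrightarrow> a \<noteq> b \<and> b \<noteq> c \<and> a \<noteq> c"
  unfolding cyc_pos_def by auto

lemma cyc_pos_strict_mono:
  assumes "\<And>u v. u \<in> {a, b, c} \<Longrightarrow> v \<in> {a, b, c} \<Longrightarrow> u < v \<Longrightarrow> \<phi> u < \<phi> v" "cyc_pos a b c"
  shows "cyc_pos (\<phi> a) (\<phi> b) (\<phi> c)"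
  using assms(2) unfolding cyc_pos_def by (elim disjE conjE) (use assms(1) in auto)

lemma cyc_pos_strict_antimono:
  assumes "\<And>u v. u \<in> {a, b, c} \<Longrightarrow> v \<in> {a, b, c} \<Longrightarrow> u < v \<Longrightarrow> \<phi> v < \<phi> u" "cyc_pos a b c"
  shows "cyc_pos (\<phi> c) (\<phi> b) (\<phi> a)"
  using assms(2) unfolding cyc_pos_def by (elim disjE conjE) (use assms(1) in auto)

definition rot :: "real \<Rightarrow> real \<Rightarrow> real" where
  "rot c v = (if c \<le> v then v - c else v - c + 1)"

lemma rot_eq_0_iff: "c \<in> {0..<1} \<Longrightarrow> v \<in> {0..<1} \<Longrightarrow> rot c v = 0 \<longleftrightarrow> v = c"
  unfolding rot_def by auto

lemma cyc_pos_rot_iff: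
  assumes "c \<in> {0..<1}" "a \<in> {0..<1}" "b \<in> {0..<1}" "d \<in> {0..<1}"
  shows "cyc_pos (rot c a) (rot c b) (rot c d) \<longleftrightarrow> cyc_pos a b d"
  using assms unfolding cyc_pos_def rot_def by auto

lemma cyc_pos_from_iff_rot_less:
  assumes "c \<in> {0..<1}" "a \<in> {0..<1}" "b \<in> {0..<1}"
  shows "cyc_pos c a b \<longleftrightarrow> a \<noteq> c \<and> b \<noteq> c \<and> rot c a < rot c b"
  using assms unfolding cyc_pos_def rot_def by auto

lemma cyc_pos_strict_mono_fixing_0:
  fixes g :: "real \<Rightarrow> real"
  assumes g0: "g 0 = 0" and maps: "\<And>u. u \<in> {0<..<1} \<Longrightarrow> g u \<in> {0<..<1}"
    and mono: "\<And>u v. u \<in> {0<..<1} \<Longrightarrow> v \<in> {0<..<1} \<Longrightarrow> u < v \<Longrightarrow> g u < g v"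
    and abc: "a \<in> {0..<1}" "b \<in> {0..<1}" "c \<in> {0..<1}" and cyc: "cyc_pos a b c"
  shows "cyc_pos (g a) (g b) (g c)"
proof (rule cyc_pos_strict_mono[OF _ cyc])
  fix u v assume "u \<in> {a, b, c}" "v \<in> {a, b, c}" "u < v"
  then have "u \<in> {0..<1}" "v \<in> {0<..<1}" using abc by auto
  then show "g u < g v" using maps[of v] mono[of u v] g0 \<open>u < v\<close> by (cases "u = 0") auto
qed

lemma cyc_pos_strict_antimono_fixing_0:
  fixes g :: "real \<Rightarrow> real"
  assumes g0: "g 0 = 0" and maps: "\<And>u. u \<in> {0<..<1} \<Longrightarrow> g u \<in> {0<..<1}"
    and anti: "\<And>u v. u \<in> {0<..<1} \<Longrightarrow> v \<in> {0<..<1} \<Longrightarrow> u < v \<Longrightarrow> g v < g u"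
    and abc: "a \<in> {0..<1}" "b \<in> {0..<1}" "c \<in> {0..<1}" and cyc: "cyc_pos a b c"
  shows "cyc_pos (g c) (g b) (g a)"
proof -
  have d: "a \<noteq> b" "b \<noteq> c" "a \<noteq> c" using cyc_pos_distinct[OF cyc] by auto
  consider "a = 0" | "b = 0" | "c = 0" | "a \<noteq> 0" "b \<noteq> 0" "c \<noteq> 0" by blast
  then show ?thesis
  proof cases
    case 1
    then have "b \<in> {0<..<1}" "c \<in> {0<..<1}" using abc d by auto
    then show ?thesis using 1 cyc maps[of b] maps[of c] anti[of b c] g0 unfolding cyc_pos_def by auto
  next
    case 2
    then have "a \<in> {0<..<1}" "c \<in> {0<..<1}" using abc d by auto
    then show ?thesis
      using 2 cyc maps[of a] maps[of c] anti[of a c] anti[of c a] g0 unfolding cyc_pos_def by auto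
  next
    case 3
    then have "a \<in> {0<..<1}" "b \<in> {0<..<1}" using abc d by auto
    then show ?thesis using 3 cyc maps[of a] maps[of b] anti[of a b] g0 unfolding cyc_pos_def by auto
  next
    case 4
    then have "a \<in> {0<..<1}" "b \<in> {0<..<1}" "c \<in> {0<..<1}" using abc by auto
    then show ?thesis by (intro cyc_pos_strict_antimono[OF _ cyc]) (auto intro: anti)
  qed
qed

lemma continuous_inj_on_Icc_increasing:
  fixes f :: "real \<Rightarrow> real"
  assumes cont: "continuous_on {a..b} f" and inj: "inj_on f {a..b}" and ab: "f a < f b"
    and xy: "a \<le> x" "x < y" "y \<le> b"
  shows "f x < f y"
proof -
  have between: "f a < f z \<and> f z < f b" if "a < z" "z < b" for z
    using continuous_inj_imp_mono[OF that cont inj] ab by auto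
  show ?thesis
  proof (cases "x = a \<or> y = b")
    case True
    then consider "x = a" "y = b" | "x = a" "y < b" | "a < x" "y = b" using xy by force
    then show ?thesis by cases (use ab between[of x] between[of y] xy in auto)
  next
    case False
    then have "a < x" "y < b" using xy by auto
    have "continuous_on {x..b} f" "inj_on f {x..b}"
      using \<open>a < x\<close> by (auto intro: continuous_on_subset[OF cont] inj_on_subset[OF inj])
    from continuous_inj_imp_mono[OF \<open>x < y\<close> \<open>y < b\<close> this]
    show ?thesis using between[OF \<open>a < x\<close>] xy by auto
  qed
qed

lemma continuous_inj_on_interval_strict_mono:
  fixes f :: "real \<Rightarrow> real"
  assumes S: "is_interval S" and cont: "continuous_on S f" and inj: "inj_on f S"
  shows "(\<forall>x\<in>S. \<forall>y\<in>S. x < y \<longrightarrow> f x < f y) \<or> (\<forall>x\<in>S. \<forall>y\<in>S. x < y \<longrightarrow> f y < f x)"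
proof -
  have Icc: "{min x u..max y v} \<subseteq> S" if "x \<in> S" "y \<in> S" "u \<in> S" "v \<in> S" for x y u v
  proof -
    have "min x u \<in> S" "max y v \<in> S" using that by (simp_all add: min_def max_def)
    then show ?thesis using S unfolding is_interval_1 by fastforce
  qed
  have increasing: "\<forall>x\<in>S. \<forall>y\<in>S. x < y \<longrightarrow> g x < g y"
    if g: "continuous_on S g" "inj_on g S" and uv: "u \<in> S" "v \<in> S" "u < v" "g u < g v"
    for g :: "real \<Rightarrow> real" and u v
  proof (intro ballI impI)
    fix x y assume xy: "x \<in> S" "y \<in> S" "x < y"
    define lo hi where "lo = min x u" and "hi = max y v"
    have sub: "{lo..hi} \<subseteq> S" unfolding lo_def hi_def by (rule Icc[OF xy(1,2) uv(1,2)])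
    have c: "continuous_on {lo..hi} g" "inj_on g {lo..hi}"
      using sub g by (auto intro: continuous_on_subset inj_on_subset)
    have "continuous_on {lo..hi} (\<lambda>z. - g z)" "inj_on (\<lambda>z. - g z) {lo..hi}"
      using c by (auto intro: continuous_intros simp: inj_on_def)
    then have "\<not> g hi < g lo"
      using continuous_inj_on_Icc_increasing[of lo hi "\<lambda>z. - g z" u v] uv
      by (auto simp: lo_def hi_def)
    moreover have "lo < hi" using xy by (simp add: lo_def hi_def)
    then have "g lo \<noteq> g hi" using inj_onD[OF c(2), of lo hi] by auto
    ultimately show "g x < g y"
      using continuous_inj_on_Icc_increasing[OF c, of x y] xy by (auto simp: lo_def hi_def)
  qed
  show ?thesis
  proof (cases "\<exists>u\<in>S. \<exists>v\<in>S. u < v")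
    case True
    then obtain u v where uv: "u \<in> S" "v \<in> S" "u < v" by blast
    have "f u \<noteq> f v" using inj_onD[OF inj] uv by force
    then consider "f u < f v" | "- f u < - f v" by fastforce
    then show ?thesis
    proof cases
      case 1
      then show ?thesis using increasing[OF cont inj uv] by blast
    next
      case 2
      have "continuous_on S (\<lambda>z. - f z)" "inj_on (\<lambda>z. - f z) S"
        using cont inj by (auto intro: continuous_intros simp: inj_on_def)
      from increasing[OF this uv 2] show ?thesis by auto
    qed
  qed blast
qed

lemma continuous_within_section_at_unique_preimage:
  fixes \<sigma> :: "real \<Rightarrow> 'a::heine_borel"
  assumes cont: "continuous_on {0..1} \<sigma>"
    and sec: "\<And>x. x \<in> S \<Longrightarrow> Q x \<in> {0..1} \<and> \<sigma> (Q x) = x"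
    and x0: "x0 \<in> S" and unique: "\<And>v. v \<in> {0..1} \<Longrightarrow> \<sigma> v = x0 \<Longrightarrow> v = Q x0"
  shows "continuous (at x0 within S) Q"
  unfolding continuous_within_eps_delta
proof (intro allI impI)
  fix e :: real assume e: "e > 0"
  define K where "K = {0..1} \<inter> {v. e \<le> dist v (Q x0)}"
  have cK: "compact K" unfolding K_def
    by (intro compact_Int_closed compact_Icc closed_Collect_le continuous_intros)
  have "compact (\<sigma> ` K)"
    by (rule compact_continuous_image[OF continuous_on_subset[OF cont] cK]) (auto simp: K_def)
  moreover have "x0 \<notin> \<sigma> ` K"
    using unique e by (auto simp: K_def)
  ultimately obtain d where d: "d > 0" "\<forall>y\<in>\<sigma> ` K. d \<le> dist x0 y"
    using separate_point_closed[OF compact_imp_closed] by metis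
  show "\<exists>d>0. \<forall>x'\<in>S. dist x' x0 < d \<longrightarrow> dist (Q x') (Q x0) < e"
  proof (intro exI conjI ballI impI)
    fix x' assume x': "x' \<in> S" "dist x' x0 < d"
    show "dist (Q x') (Q x0) < e"
    proof (rule ccontr)
      assume "\<not> dist (Q x') (Q x0) < e"
      then have "Q x' \<in> K" using sec[OF x'(1)] by (auto simp: K_def)
      then have "\<sigma> (Q x') \<in> \<sigma> ` K" by blast
      then show False using d sec[OF x'(1)] x'(2) by (auto simp: dist_commute)
    qed
  qed (rule d(1))
qed

text \<open>A self-map of \<open>S\<close> that is monotone in a chart \<open>Q\<close> (a section of a path \<open>\<sigma>\<close>) moves the
  chart coordinate of every orbit monotonically, so orbits converge, necessarily to fixed points.\<close>

lemma orbit_converges_if_chart_monotone: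
  fixes \<sigma> :: "real \<Rightarrow> 'a::heine_borel"
  assumes cont: "continuous_on {0..1} \<sigma>" and img: "\<sigma> ` {0..1} \<subseteq> S"
    and sec: "\<And>x. x \<in> S \<Longrightarrow> Q x \<in> {0..1} \<and> \<sigma> (Q x) = x"
    and h_cont: "continuous_on S h" and h_maps: "\<And>x. x \<in> S \<Longrightarrow> h x \<in> S"
    and h_mono: "\<And>x y. x \<in> S \<Longrightarrow> y \<in> S \<Longrightarrow> Q x \<le> Q y \<Longrightarrow> Q (h x) \<le> Q (h y)"
    and t: "t \<in> S"
  shows "\<exists>L\<in>S. ((\<lambda>n. (h ^^ n) t) \<longlonglongrightarrow> L) \<and> h L = L"
proof -
  define u where "u n = Q ((h ^^ n) t)" for n
  have orbit_in: "(h ^^ n) t \<in> S" for n by (induction n) (auto intro: h_maps t)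
  have u01: "u n \<in> {0..1}" and \<sigma>u: "\<sigma> (u n) = (h ^^ n) t" for n
    using sec[OF orbit_in[of n]] by (simp_all add: u_def)
  have up: "u n \<le> u (Suc n) \<Longrightarrow> u (Suc n) \<le> u (Suc (Suc n))"
    and down: "u (Suc n) \<le> u n \<Longrightarrow> u (Suc (Suc n)) \<le> u (Suc n)" for n
    unfolding u_def using h_mono[OF orbit_in[of n] orbit_in[of "Suc n"]]
      h_mono[OF orbit_in[of "Suc n"] orbit_in[of n]] by simp_all
  have bounded: "bdd_above (range u)" "bdd_below (range u)"
    using u01 by (auto intro!: bdd_aboveI[of _ 1] bdd_belowI[of _ 0])
  obtain l where l: "u \<longlonglongrightarrow> l"
  proof (cases "u 0 \<le> u 1")
    case True
    have "u n \<le> u (Suc n)" for n by (induction n) (use True up in auto)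
    then show ?thesis using LIMSEQ_incseq_SUP[OF bounded(1)] that by (blast intro: incseq_SucI)
  next
    case False
    have "u (Suc n) \<le> u n" for n by (induction n) (use False down in auto)
    then show ?thesis using LIMSEQ_decseq_INF[OF bounded(2)] that by (blast intro: decseq_SucI)
  qed
  have l01: "l \<in> {0..1}"
    using closed_atLeastAtMost l u01 by (metis closed_sequentially)
  have "(\<lambda>n. \<sigma> (u n)) \<longlonglongrightarrow> \<sigma> l"
    by (rule continuous_on_tendsto_compose[OF cont l l01]) (use u01 in auto)
  then have conv: "(\<lambda>n. (h ^^ n) t) \<longlonglongrightarrow> \<sigma> l" by (simp add: \<sigma>u)
  have LS: "\<sigma> l \<in> S" using img l01 by blast
  have "(\<lambda>n. h ((h ^^ n) t)) \<longlonglongrightarrow> h (\<sigma> l)"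
    by (rule continuous_on_tendsto_compose[OF h_cont conv LS]) (simp add: orbit_in)
  moreover have "(\<lambda>n. h ((h ^^ n) t)) \<longlonglongrightarrow> \<sigma> l"
    using LIMSEQ_Suc[OF conv] by simp
  ultimately have "h (\<sigma> l) = \<sigma> l" using LIMSEQ_unique by blast
  then show ?thesis using conv LS by blast
qed

section \<open>Orientation on a simple curve\<close>

definition orient_rev :: "(real \<Rightarrow> complex) \<Rightarrow> (complex \<Rightarrow> complex) \<Rightarrow> bool" where
  "orient_rev \<gamma> \<alpha> \<longleftrightarrow> (\<forall>x\<in>path_image \<gamma>. \<forall>y\<in>path_image \<gamma>. \<forall>z\<in>path_image \<gamma>.
      cyc_pos (param \<gamma> x) (param \<gamma> y) (param \<gamma> z) \<longrightarrow>
      cyc_pos (param \<gamma> (\<alpha> z)) (param \<gamma> (\<alpha> y)) (param \<gamma> (\<alpha> x)))"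

locale simple_curve =
  fixes \<gamma> :: "real \<Rightarrow> complex"
  assumes simple: "simple_path \<gamma>"
begin

abbreviation "\<Gamma> \<equiv> path_image \<gamma>"
abbreviation "P \<equiv> param \<gamma>"
abbreviation "loop \<equiv> pathfinish \<gamma> = pathstart \<gamma>"

lemma path_continuous: "continuous_on {0..1} \<gamma>"
  using simple by (simp add: simple_path_def path_def)

lemma loop_free:
  "a \<in> {0..1} \<Longrightarrow> b \<in> {0..1} \<Longrightarrow> \<gamma> a = \<gamma> b \<Longrightarrow> a = b \<or> a = 0 \<and> b = 1 \<or> a = 1 \<and> b = 0"
  using simple by (simp add: simple_path_def loop_free_def)

lemma curve_point: "s \<in> {0..1} \<Longrightarrow> \<gamma> s \<in> \<Gamma>"
  by (simp add: path_image_def)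

lemma closed_curve: "closed \<Gamma>"
  using simple by (simp add: closed_path_image simple_path_def)

lemma curve_limit_point: "t \<in> \<Gamma> \<Longrightarrow> t islimpt \<Gamma>"
proof (rule connected_imp_perfect)
  show "connected \<Gamma>" using simple by (simp add: simple_path_def connected_path_image)
  have "\<gamma> 0 \<noteq> \<gamma> (1/2)" using loop_free[of 0 "1/2"] by auto
  then show "\<Gamma> \<noteq> {x}" for x using curve_point[of 0] curve_point[of "1/2"] by auto
qed

lemma loop_image:
  assumes "loop"
  shows "\<Gamma> = \<gamma> ` {0..<1}"
proof
  show "\<Gamma> \<subseteq> \<gamma> ` {0..<1}"
  proof
    fix x assume "x \<in> \<Gamma>"
    then obtain s where s: "s \<in> {0..1}" "x = \<gamma> s" by (auto simp: path_image_def)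
    show "x \<in> \<gamma> ` {0..<1}"
    proof (cases "s = 1")
      case True
      then have "x = \<gamma> 0" using assms s by (simp add: pathfinish_def pathstart_def)
      then show ?thesis by force
    qed (use s in force)
  qed
qed (auto simp: path_image_def)

lemma loop_inj_on: "inj_on \<gamma> {0..<1}"
  by (rule inj_onI) (use loop_free in force)

lemma arc_inj_on:
  assumes "\<not> loop"
  shows "inj_on \<gamma> {0..1}"
proof (rule inj_onI)
  fix a b assume ab: "a \<in> {0..1}" "b \<in> {0..1}" "\<gamma> a = \<gamma> b"
  have "\<gamma> 0 \<noteq> \<gamma> 1" using assms by (simp add: pathfinish_def pathstart_def)
  then show "a = b" using loop_free[OF ab] ab by auto
qed

lemma param_section_loop:
  assumes "loop" "x \<in> \<Gamma>"
  shows "P x \<in> {0..<1} \<and> \<gamma> (P x) = x"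
proof -
  have "x \<in> \<gamma> ` {0..<1}" using assms loop_image by blast
  then show ?thesis using assms(1) by (simp add: param_def inv_into_into f_inv_into_f del: atLeastLessThan_iff)
qed

lemma param_loop_path: "loop \<Longrightarrow> s \<in> {0..<1} \<Longrightarrow> P (\<gamma> s) = s"
  by (simp add: param_def inv_into_f_f[OF loop_inj_on] del: atLeastLessThan_iff)

lemma param_arc_path: "\<not> loop \<Longrightarrow> s \<in> {0..1} \<Longrightarrow> P (\<gamma> s) = s"
  by (simp add: param_def inv_into_f_f[OF arc_inj_on] del: atLeastAtMost_iff)

lemma param_section_arc:
  assumes "\<not> loop" "x \<in> \<Gamma>"
  shows "P x \<in> {0..1} \<and> \<gamma> (P x) = x"
proof -
  have "P x = inv_into {0..1} \<gamma> x" using assms(1) by (simp add: param_def)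
  moreover have "x \<in> \<gamma> ` {0..1}" using assms(2) by (simp add: path_image_def)
  ultimately show ?thesis using inv_into_into f_inv_into_f by metis
qed

lemma param_section:
  assumes "x \<in> \<Gamma>"
  shows "P x \<in> {0..1} \<and> \<gamma> (P x) = x"
proof (cases loop)
  case True
  then show ?thesis using param_section_loop[OF True assms] by simp
qed (use param_section_arc assms in blast)

lemma param_inj:
  assumes "x \<in> \<Gamma>" "y \<in> \<Gamma>" "P x = P y"
  shows "x = y"
proof -
  have "x = \<gamma> (P x)" using param_section[OF assms(1)] by simp
  also have "\<dots> = y" using param_section[OF assms(2)] assms(3) by simp
  finally show ?thesis .
qed

lemma orient_pres_comp:
  "orient_pres \<gamma> h \<Longrightarrow> orient_pres \<gamma> k \<Longrightarrow> (\<And>x. x \<in> \<Gamma> \<Longrightarrow> k x \<in> \<Gamma>) \<Longrightarrow>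
    orient_pres \<gamma> (\<lambda>x. h (k x))"
  unfolding orient_pres_def by simp

lemma orient_rev_comp:
  "orient_rev \<gamma> h \<Longrightarrow> orient_rev \<gamma> k \<Longrightarrow> (\<And>x. x \<in> \<Gamma> \<Longrightarrow> k x \<in> \<Gamma>) \<Longrightarrow>
    orient_pres \<gamma> (\<lambda>x. h (k x))"
  unfolding orient_pres_def orient_rev_def by simp

lemma orient_pres_funpow:
  assumes "orient_pres \<gamma> h" "\<And>x. x \<in> \<Gamma> \<Longrightarrow> h x \<in> \<Gamma>"
  shows "orient_pres \<gamma> (h ^^ n)"
proof (induction n)
  case 0
  then show ?case by (simp add: orient_pres_def)
next
  case (Suc n)
  have "(h ^^ n) x \<in> \<Gamma>" if "x \<in> \<Gamma>" for x using that by (induction n) (auto intro: assms(2))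
  then show ?case using orient_pres_comp[OF assms(1) Suc.IH] by (simp add: o_def)
qed

lemma param_inv_into_distinct:
  assumes "bij_betw h \<Gamma> \<Gamma>" "x \<in> \<Gamma>" "y \<in> \<Gamma>" "x \<noteq> y"
  shows "P (inv_into \<Gamma> h x) \<noteq> P (inv_into \<Gamma> h y)"
proof
  assume "P (inv_into \<Gamma> h x) = P (inv_into \<Gamma> h y)"
  then have "inv_into \<Gamma> h x = inv_into \<Gamma> h y"
    using param_inj bij_betw_apply[OF bij_betw_inv_into[OF assms(1)]] assms(2,3) by blast
  then have "h (inv_into \<Gamma> h x) = h (inv_into \<Gamma> h y)" by simp
  then show False using bij_betw_inv_into_right[OF assms(1)] assms(2-4) by simp
qed

text \<open>Among three distinct points exactly one of the two cyclic orders holds, so an inverse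
  map inherits the behaviour of the map on triples.\<close>

lemma orient_pres_inv_into:
  assumes h: "bij_betw h \<Gamma> \<Gamma>" and pres: "orient_pres \<gamma> h"
  shows "orient_pres \<gamma> (inv_into \<Gamma> h)"
  unfolding orient_pres_def
proof (intro ballI impI)
  fix x y z assume xyz: "x \<in> \<Gamma>" "y \<in> \<Gamma>" "z \<in> \<Gamma>" and c: "cyc_pos (P x) (P y) (P z)"
  let ?i = "inv_into \<Gamma> h"
  have inv: "?i w \<in> \<Gamma>" "h (?i w) = w" if "w \<in> \<Gamma>" for w
    using bij_betw_apply[OF bij_betw_inv_into[OF h] that] bij_betw_inv_into_right[OF h that] by auto
  have "P (?i x) \<noteq> P (?i y)" "P (?i y) \<noteq> P (?i z)" "P (?i x) \<noteq> P (?i z)"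
    using cyc_pos_distinct[OF c] param_inv_into_distinct[OF h] xyz by blast+
  moreover have "\<not> cyc_pos (P (?i z)) (P (?i y)) (P (?i x))"
  proof
    assume "cyc_pos (P (?i z)) (P (?i y)) (P (?i x))"
    then have "cyc_pos (P (h (?i z))) (P (h (?i y))) (P (h (?i x)))"
      using pres inv(1) xyz unfolding orient_pres_def by blast
    then show False using inv(2) xyz cyc_pos_asym[OF c] by simp
  qed
  ultimately show "cyc_pos (P (?i x)) (P (?i y)) (P (?i z))"
    using cyc_pos_total by blast
qed

lemma orient_rev_inv_into:
  assumes h: "bij_betw h \<Gamma> \<Gamma>" and rev: "orient_rev \<gamma> h"
  shows "orient_rev \<gamma> (inv_into \<Gamma> h)"
  unfolding orient_rev_def
proof (intro ballI impI)
  fix x y z assume xyz: "x \<in> \<Gamma>" "y \<in> \<Gamma>" "z \<in> \<Gamma>" and c: "cyc_pos (P x) (P y) (P z)"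
  let ?i = "inv_into \<Gamma> h"
  have inv: "?i w \<in> \<Gamma>" "h (?i w) = w" if "w \<in> \<Gamma>" for w
    using bij_betw_apply[OF bij_betw_inv_into[OF h] that] bij_betw_inv_into_right[OF h that] by auto
  have "P (?i z) \<noteq> P (?i y)" "P (?i y) \<noteq> P (?i x)" "P (?i z) \<noteq> P (?i x)"
    using cyc_pos_distinct[OF c] param_inv_into_distinct[OF h] xyz by blast+
  moreover have "\<not> cyc_pos (P (?i x)) (P (?i y)) (P (?i z))"
  proof
    assume "cyc_pos (P (?i x)) (P (?i y)) (P (?i z))"
    then have "cyc_pos (P (h (?i z))) (P (h (?i y))) (P (h (?i x)))"
      using rev inv(1) xyz unfolding orient_rev_def by blast
    then show False using inv(2) xyz cyc_pos_asym[OF c] by simp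
  qed
  ultimately show "cyc_pos (P (?i z)) (P (?i y)) (P (?i x))"
    using cyc_pos_total by blast
qed

definition param_mono :: "(complex \<Rightarrow> complex) \<Rightarrow> bool" where
  "param_mono h \<longleftrightarrow> (\<forall>x\<in>\<Gamma>. \<forall>y\<in>\<Gamma>. P x < P y \<longrightarrow> P (h x) < P (h y))"

definition param_antimono :: "(complex \<Rightarrow> complex) \<Rightarrow> bool" where
  "param_antimono h \<longleftrightarrow> (\<forall>x\<in>\<Gamma>. \<forall>y\<in>\<Gamma>. P x < P y \<longrightarrow> P (h y) < P (h x))"

lemma param_mono_le:
  assumes "param_mono h" "x \<in> \<Gamma>" "y \<in> \<Gamma>" "P x \<le> P y"
  shows "P (h x) \<le> P (h y)"
proof (cases "P x = P y")
  case True
  then show ?thesis using param_inj[OF assms(2,3) True] by simp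
next
  case False
  then have "P x < P y" using assms(4) by simp
  then show ?thesis using assms(1-3) unfolding param_mono_def by (blast intro: less_imp_le)
qed

lemma param_antimono_le:
  assumes "param_antimono h" "x \<in> \<Gamma>" "y \<in> \<Gamma>" "P x \<le> P y"
  shows "P (h y) \<le> P (h x)"
proof (cases "P x = P y")
  case True
  then show ?thesis using param_inj[OF assms(2,3) True] by simp
next
  case False
  then have "P x < P y" using assms(4) by simp
  then show ?thesis using assms(1-3) unfolding param_antimono_def by (blast intro: less_imp_le)
qed

lemma param_mono_funpow:
  assumes "param_mono h" "\<And>x. x \<in> \<Gamma> \<Longrightarrow> h x \<in> \<Gamma>"
  shows "param_mono (h ^^ n)"
proof (induction n)
  case (Suc n)
  have "(h ^^ n) x \<in> \<Gamma>" if "x \<in> \<Gamma>" for x using that by (induction n) (auto intro: assms(2))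
  with Suc.IH assms(1) show ?case by (simp add: param_mono_def)
qed (simp add: param_mono_def)

lemma param_antimono_square:
  "param_antimono h \<Longrightarrow> (\<And>x. x \<in> \<Gamma> \<Longrightarrow> h x \<in> \<Gamma>) \<Longrightarrow> param_mono (h ^^ 2)"
  unfolding param_mono_def param_antimono_def by (simp add: numeral_2_eq_2)

lemma param_mono_inv_into:
  assumes h: "bij_betw h \<Gamma> \<Gamma>" and mono: "param_mono h"
  shows "param_mono (inv_into \<Gamma> h)"
  unfolding param_mono_def
proof (intro ballI impI)
  fix x y assume xy: "x \<in> \<Gamma>" "y \<in> \<Gamma>" "P x < P y"
  let ?i = "inv_into \<Gamma> h"
  show "P (?i x) < P (?i y)"
  proof (rule ccontr)
    assume "\<not> ?thesis"
    then have "P (h (?i y)) \<le> P (h (?i x))"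
      using param_mono_le[OF mono] bij_betw_apply[OF bij_betw_inv_into[OF h]] xy by simp
    then show False using xy bij_betw_inv_into_right[OF h] by simp
  qed
qed

lemma param_antimono_inv_into:
  assumes h: "bij_betw h \<Gamma> \<Gamma>" and anti: "param_antimono h"
  shows "param_antimono (inv_into \<Gamma> h)"
  unfolding param_antimono_def
proof (intro ballI impI)
  fix x y assume xy: "x \<in> \<Gamma>" "y \<in> \<Gamma>" "P x < P y"
  let ?i = "inv_into \<Gamma> h"
  show "P (?i y) < P (?i x)"
  proof (rule ccontr)
    assume "\<not> ?thesis"
    then have "P (h (?i y)) \<le> P (h (?i x))"
      using param_antimono_le[OF anti] bij_betw_apply[OF bij_betw_inv_into[OF h]] xy by simp
    then show False using xy bij_betw_inv_into_right[OF h] by simp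
  qed
qed

lemma arc_param_continuous:
  assumes "\<not> loop"
  shows "continuous_on \<Gamma> P"
  unfolding path_image_def
  by (rule continuous_on_inv[OF path_continuous compact_Icc]) (simp add: param_arc_path[OF assms])

lemma arc_param_mono_or_antimono:
  assumes arc: "\<not> loop" and h: "bij_betw h \<Gamma> \<Gamma>" and cont: "continuous_on \<Gamma> h"
  shows "param_mono h \<or> param_antimono h"
proof -
  define f where "f s = P (h (\<gamma> s))" for s
  have h_in: "h x \<in> \<Gamma>" if "x \<in> \<Gamma>" for x by (rule bij_betw_apply[OF h that])
  have "continuous_on {0..1} (\<lambda>s. h (\<gamma> s))"
    by (rule continuous_on_compose2[OF cont path_continuous]) (auto intro: curve_point)
  then have f_cont: "continuous_on {0..1} f" unfolding f_def
    by (rule continuous_on_compose2[OF arc_param_continuous[OF arc]]) (auto intro: h_in curve_point)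
  have f_inj: "inj_on f {0..1}"
  proof (rule inj_onI)
    fix s s' assume ss: "s \<in> {0..1}" "s' \<in> {0..1}" "f s = f s'"
    then have "h (\<gamma> s) = h (\<gamma> s')"
      using param_inj[OF h_in[OF curve_point[OF ss(1)]] h_in[OF curve_point[OF ss(2)]]]
      unfolding f_def by blast
    then have "\<gamma> s = \<gamma> s'" using bij_betw_imp_inj_on[OF h] curve_point ss by (auto dest: inj_onD)
    then show "s = s'" using inj_onD[OF arc_inj_on[OF arc] _ ss(1,2)] by blast
  qed
  have f_param: "P (h x) = f (P x)" "P x \<in> {0..1}" if "x \<in> \<Gamma>" for x
    using param_section[OF that] by (simp_all add: f_def)
  from continuous_inj_on_interval_strict_mono[OF is_interval_cc f_cont f_inj]
  show ?thesis
  proof (elim disjE)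
    assume "\<forall>x\<in>{0..1}. \<forall>y\<in>{0..1}. x < y \<longrightarrow> f x < f y"
    then have "param_mono h" unfolding param_mono_def using f_param by simp
    then show ?thesis ..
  next
    assume "\<forall>x\<in>{0..1}. \<forall>y\<in>{0..1}. x < y \<longrightarrow> f y < f x"
    then have "param_antimono h" unfolding param_antimono_def using f_param by simp
    then show ?thesis ..
  qed
qed

lemma param_mono_imp_orient_pres:
  assumes mono: "param_mono h"
  shows "orient_pres \<gamma> h"
  unfolding orient_pres_def
proof (intro ballI impI)
  fix x y z assume xyz: "x \<in> \<Gamma>" "y \<in> \<Gamma>" "z \<in> \<Gamma>" and c: "cyc_pos (P x) (P y) (P z)"
  define \<phi> where "\<phi> v = P (h (\<gamma> v))" for v
  have \<phi>: "P (h w) = \<phi> (P w)" if "w \<in> \<Gamma>" for w using param_section[OF that] by (simp add: \<phi>_def)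
  have "cyc_pos (\<phi> (P x)) (\<phi> (P y)) (\<phi> (P z))"
  proof (rule cyc_pos_strict_mono[OF _ c])
    fix u v assume "u \<in> {P x, P y, P z}" "v \<in> {P x, P y, P z}" "u < v"
    then show "\<phi> u < \<phi> v" using mono xyz \<phi> unfolding param_mono_def by auto
  qed
  then show "cyc_pos (P (h x)) (P (h y)) (P (h z))" using \<phi> xyz by simp
qed

lemma arc_orient_pres_not_param_antimono:
  assumes arc: "\<not> loop" and pres: "orient_pres \<gamma> h"
  shows "\<not> param_antimono h"
proof
  assume anti: "param_antimono h"
  have pts: "\<gamma> 0 \<in> \<Gamma>" "\<gamma> (1/2) \<in> \<Gamma>" "\<gamma> 1 \<in> \<Gamma>" by (auto intro: curve_point)
  have "cyc_pos (P (\<gamma> 0)) (P (\<gamma> (1/2))) (P (\<gamma> 1))"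
    using param_arc_path[OF arc] by (simp add: cyc_pos_def)
  then have "cyc_pos (P (h (\<gamma> 0))) (P (h (\<gamma> (1/2)))) (P (h (\<gamma> 1)))"
    using pres pts unfolding orient_pres_def by blast
  moreover have "P (h (\<gamma> (1/2))) < P (h (\<gamma> 0))" "P (h (\<gamma> 1)) < P (h (\<gamma> (1/2)))"
    using anti pts param_arc_path[OF arc] unfolding param_antimono_def by auto
  ultimately show False unfolding cyc_pos_def by auto
qed

lemma arc_orbit_converges:
  assumes arc: "\<not> loop" and maps: "\<And>x. x \<in> \<Gamma> \<Longrightarrow> h x \<in> \<Gamma>" and cont: "continuous_on \<Gamma> h"
    and mono: "param_mono h" and t: "t \<in> \<Gamma>"
  shows "\<exists>L\<in>\<Gamma>. ((\<lambda>n. (h ^^ n) t) \<longlonglongrightarrow> L) \<and> h L = L"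
  by (rule orbit_converges_if_chart_monotone[OF path_continuous _ param_section cont maps _ t])
     (auto simp: path_image_def intro: param_mono_le[OF mono])

section \<open>Closed curves\<close>

text \<open>On a closed curve, \<open>loop_chart c\<close> is the parameter of the curve restarted at parameter \<open>c\<close>,
  a section of \<open>shiftpath c \<gamma>\<close>.\<close>

definition loop_chart :: "real \<Rightarrow> complex \<Rightarrow> real" where
  "loop_chart c x = rot c (P x)"

lemma loop_path_end: "loop \<Longrightarrow> \<gamma> 1 = \<gamma> 0"
  by (simp add: pathfinish_def pathstart_def)

lemma shiftpath_continuous: "loop \<Longrightarrow> c \<in> {0..1} \<Longrightarrow> continuous_on {0..1} (shiftpath c \<gamma>)"
  using path_shiftpath[of \<gamma> c] simple by (simp add: simple_path_def path_def)

lemma shiftpath_image: "loop \<Longrightarrow> c \<in> {0..1} \<Longrightarrow> shiftpath c \<gamma> ` {0..1} \<subseteq> \<Gamma>"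
  using path_image_shiftpath[of c \<gamma>] by (simp add: path_image_def)

lemma loop_chart_section:
  assumes "loop" "c \<in> {0..<1}" "x \<in> \<Gamma>"
  shows "loop_chart c x \<in> {0..<1} \<and> shiftpath c \<gamma> (loop_chart c x) = x"
  using param_section_loop[OF assms(1,3)] assms(2) loop_path_end[OF assms(1)]
  unfolding loop_chart_def rot_def shiftpath_def by auto

lemma loop_chart_unique_preimage:
  assumes loop: "loop" and c: "c \<in> {0..<1}" and x0: "x0 \<in> \<Gamma>" and v: "v \<in> {0..1}"
    and x0_eq: "shiftpath c \<gamma> v = x0" and not_end: "v < 1 \<or> x0 \<noteq> \<gamma> c"
  shows "v = loop_chart c x0"
proof -
  have p: "P x0 \<in> {0..<1}" "\<gamma> (P x0) = x0" using param_section_loop[OF loop x0] by auto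
  have g10: "\<gamma> 1 = \<gamma> 0" by (rule loop_path_end[OF loop])
  show ?thesis
  proof (cases "c + v \<le> 1")
    case True
    then have "\<gamma> (c + v) = \<gamma> (P x0)" using x0_eq p by (simp add: shiftpath_def)
    then have "c + v = P x0 \<or> c + v = 0 \<and> P x0 = 1 \<or> c + v = 1 \<and> P x0 = 0"
      using loop_free[of "c + v" "P x0"] True c v p by auto
    then show ?thesis
    proof (elim disjE)
      assume h: "c + v = 1 \<and> P x0 = 0"
      show ?thesis
      proof (cases "c = 0")
        case True
        then have "v = 1" "x0 = \<gamma> c" using h x0_eq g10 by (simp_all add: shiftpath_def)
        then show ?thesis using not_end by simp
      qed (use h c in \<open>simp add: loop_chart_def rot_def\<close>)
    qed (use c v p in \<open>auto simp: loop_chart_def rot_def\<close>)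
  next
    case False
    then have "\<gamma> (c + v - 1) = \<gamma> (P x0)" using x0_eq p by (simp add: shiftpath_def)
    then have "c + v - 1 = P x0 \<or> c + v - 1 = 0 \<and> P x0 = 1 \<or> c + v - 1 = 1 \<and> P x0 = 0"
      using loop_free[of "c + v - 1" "P x0"] False c v p by auto
    then show ?thesis
    proof (elim disjE)
      assume h: "c + v - 1 = P x0"
      show ?thesis
      proof (cases "P x0 = c")
        case True
        then show ?thesis using h not_end p by simp
      qed (use h v in \<open>auto simp: loop_chart_def rot_def\<close>)
    qed (use c v p in auto)
  qed
qed

lemma loop_chart_shiftpath:
  assumes "loop" "c \<in> {0..<1}" "v \<in> {0..<1}"
  shows "loop_chart c (shiftpath c \<gamma> v) = v"
proof -
  have "shiftpath c \<gamma> v \<in> \<Gamma>" using shiftpath_image[OF assms(1)] assms(2,3) by force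
  then show ?thesis using loop_chart_unique_preimage[OF assms(1,2) _ _ refl] assms(3) by auto
qed

lemma loop_chart_eq_0_iff:
  assumes "loop" "\<tau> \<in> \<Gamma>" "x \<in> \<Gamma>"
  shows "loop_chart (P \<tau>) x = 0 \<longleftrightarrow> x = \<tau>"
  unfolding loop_chart_def
  using rot_eq_0_iff param_section_loop[OF assms(1,2)] param_section_loop[OF assms(1,3)] param_inj[OF assms(3,2)]
  by auto

lemma loop_chart_continuous:
  assumes loop: "loop" and \<tau>: "\<tau> \<in> \<Gamma>"
  shows "continuous_on (\<Gamma> - {\<tau>}) (loop_chart (P \<tau>))"
proof -
  have c: "P \<tau> \<in> {0..<1}" "\<gamma> (P \<tau>) = \<tau>" using param_section_loop[OF loop \<tau>] by auto
  have "continuous (at x0 within \<Gamma>) (loop_chart (P \<tau>))" if x0: "x0 \<in> \<Gamma>" "x0 \<noteq> \<tau>" for x0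
  proof (rule continuous_within_section_at_unique_preimage[OF shiftpath_continuous[OF loop] _ x0(1)])
    show "P \<tau> \<in> {0..1}" using c by auto
    show "loop_chart (P \<tau>) x \<in> {0..1} \<and> shiftpath (P \<tau>) \<gamma> (loop_chart (P \<tau>) x) = x"
      if "x \<in> \<Gamma>" for x
      using loop_chart_section[OF loop c(1) that] by auto
    fix v assume "v \<in> {0..1}" "shiftpath (P \<tau>) \<gamma> v = x0"
    then show "v = loop_chart (P \<tau>) x0"
      by (rule loop_chart_unique_preimage[OF loop c(1) x0(1)]) (use x0(2) c(2) in auto)
  qed
  then show ?thesis
    by (simp add: continuous_on_eq_continuous_within continuous_within_subset[of _ \<Gamma>])
qed

text \<open>Cutting the circle at a fixed point of an orientation preserving map turns cyclic
  order into linear order.\<close>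

lemma orient_pres_loop_chart_mono:
  assumes loop: "loop" and \<tau>: "\<tau> \<in> \<Gamma>" "h \<tau> = \<tau>" and pres: "orient_pres \<gamma> h"
    and maps: "\<And>x. x \<in> \<Gamma> \<Longrightarrow> h x \<in> \<Gamma>"
    and xy: "x \<in> \<Gamma>" "y \<in> \<Gamma>" "loop_chart (P \<tau>) x \<le> loop_chart (P \<tau>) y"
  shows "loop_chart (P \<tau>) (h x) \<le> loop_chart (P \<tau>) (h y)"
proof -
  let ?c = "P \<tau>" and ?Q = "loop_chart (P \<tau>)"
  have c: "?c \<in> {0..<1}" using param_section_loop[OF loop \<tau>(1)] by auto
  have Px: "P x \<in> {0..<1}" "P y \<in> {0..<1}" "P (h x) \<in> {0..<1}" "P (h y) \<in> {0..<1}"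
    using param_section_loop[OF loop] xy maps by auto
  have Q_in: "?Q z \<in> {0..<1}" if "z \<in> \<Gamma>" for z using loop_chart_section[OF loop c that] by auto
  show ?thesis
  proof (cases "?Q x = ?Q y")
    case True
    then have "x = y" using loop_chart_section[OF loop c] xy(1,2) by metis
    then show ?thesis by simp
  next
    case False
    then have lt: "?Q x < ?Q y" using xy by simp
    show ?thesis
    proof (cases "x = \<tau>")
      case True
      then have "?Q (h x) = 0" using \<tau> loop_chart_eq_0_iff[OF loop \<tau>(1) \<tau>(1)] by simp
      then show ?thesis using Q_in[OF maps[OF xy(2)]] by simp
    next
      case False
      have "y \<noteq> \<tau>"
        using lt loop_chart_eq_0_iff[OF loop \<tau>(1)] Q_in[OF xy(1)] xy(1,2) by force
      then have "P x \<noteq> ?c" "P y \<noteq> ?c" using False param_inj xy \<tau> by blast+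
      then have "cyc_pos ?c (P x) (P y)"
        using cyc_pos_from_iff_rot_less[OF c Px(1,2)] lt unfolding loop_chart_def by blast
      then have "cyc_pos (P (h \<tau>)) (P (h x)) (P (h y))"
        using pres \<tau> xy unfolding orient_pres_def by blast
      then show ?thesis
        using cyc_pos_from_iff_rot_less[OF c Px(3,4)] \<tau>(2) unfolding loop_chart_def by simp
    qed
  qed
qed

lemma loop_orbit_converges:
  assumes loop: "loop" and maps: "\<And>x. x \<in> \<Gamma> \<Longrightarrow> h x \<in> \<Gamma>" and cont: "continuous_on \<Gamma> h"
    and pres: "orient_pres \<gamma> h" and \<tau>: "\<tau> \<in> \<Gamma>" "h \<tau> = \<tau>" and t: "t \<in> \<Gamma>"
  shows "\<exists>L\<in>\<Gamma>. ((\<lambda>n. (h ^^ n) t) \<longlonglongrightarrow> L) \<and> h L = L"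
proof -
  have c: "P \<tau> \<in> {0..<1}" using param_section_loop[OF loop \<tau>(1)] by simp
  then have c1: "P \<tau> \<in> {0..1}" by simp
  show ?thesis
  proof (rule orbit_converges_if_chart_monotone[OF shiftpath_continuous[OF loop c1]
        shiftpath_image[OF loop c1] _ cont maps _ t])
    show "loop_chart (P \<tau>) x \<in> {0..1} \<and> shiftpath (P \<tau>) \<gamma> (loop_chart (P \<tau>) x) = x"
      if "x \<in> \<Gamma>" for x
      using loop_chart_section[OF loop c that] by auto
    show "loop_chart (P \<tau>) (h x) \<le> loop_chart (P \<tau>) (h y)"
      if "x \<in> \<Gamma>" "y \<in> \<Gamma>" "loop_chart (P \<tau>) x \<le> loop_chart (P \<tau>) y" for x y
      by (rule orient_pres_loop_chart_mono[OF loop \<tau> pres maps that])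
  qed
qed

end

locale loop_homeomorphism = simple_curve +
  fixes h :: "complex \<Rightarrow> complex"
  assumes loop: "loop" and bij: "bij_betw h \<Gamma> \<Gamma>" and cont: "continuous_on \<Gamma> h"
begin

text \<open>The map \<open>h\<close> read in charts: the source circle is cut at \<open>\<gamma> 0\<close>, the target at its image.\<close>

definition target_cut :: real where
  "target_cut = P (h (\<gamma> 0))"

definition transfer :: "real \<Rightarrow> real" where
  "transfer u = loop_chart target_cut (h (\<gamma> u))"

lemma h_in: "x \<in> \<Gamma> \<Longrightarrow> h x \<in> \<Gamma>"
  by (rule bij_betw_apply[OF bij])

lemma start_point: "\<gamma> 0 \<in> \<Gamma>" "P (\<gamma> 0) = 0"
  using curve_point[of 0] param_loop_path[OF loop, of 0] by auto

lemma target_cut_param: "target_cut \<in> {0..<1}" "\<gamma> target_cut = h (\<gamma> 0)"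
  using param_section_loop[OF loop h_in[OF start_point(1)]] by (auto simp: target_cut_def)

lemma loop_chart_image: "x \<in> \<Gamma> \<Longrightarrow> loop_chart target_cut (h x) = transfer (P x)"
  using param_section_loop[OF loop] by (simp add: transfer_def)

lemma transfer_0: "transfer 0 = 0"
  using loop_chart_eq_0_iff[OF loop h_in[OF start_point(1)] h_in[OF start_point(1)]] by (simp add: transfer_def target_cut_def)

lemma path_interior_point:
  assumes "u \<in> {0<..<1}"
  shows "\<gamma> u \<in> \<Gamma>" "\<gamma> u \<noteq> \<gamma> 0" "P (\<gamma> u) = u"
  using assms curve_point[of u] param_loop_path[OF loop, of u] start_point(2) by force+

lemma transfer_in:
  assumes u: "u \<in> {0<..<1}"
  shows "transfer u \<in> {0<..<1}"
proof -
  have x: "h (\<gamma> u) \<in> \<Gamma>" using h_in path_interior_point(1)[OF u] by blast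
  have "h (\<gamma> u) \<noteq> h (\<gamma> 0)"
    using inj_onD[OF bij_betw_imp_inj_on[OF bij] _ path_interior_point(1)[OF u] start_point(1)] path_interior_point(2)[OF u]
    by blast
  then have "transfer u \<noteq> 0"
    using loop_chart_eq_0_iff[OF loop h_in[OF start_point(1)] x] by (simp add: transfer_def target_cut_def)
  moreover have "transfer u \<in> {0..<1}"
    using loop_chart_section[OF loop target_cut_param(1) x] by (simp add: transfer_def)
  ultimately show ?thesis by simp
qed

lemma transfer_continuous: "continuous_on {0<..<1} transfer"
proof -
  have path: "continuous_on {0<..<1} \<gamma>" by (rule continuous_on_subset[OF path_continuous]) auto
  have in1: "\<gamma> ` {0<..<1} \<subseteq> \<Gamma> - {\<gamma> 0}" using path_interior_point(1,2) by (simp add: image_subset_iff)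
  have in2: "h ` (\<Gamma> - {\<gamma> 0}) \<subseteq> \<Gamma> - {h (\<gamma> 0)}"
  proof
    fix y assume "y \<in> h ` (\<Gamma> - {\<gamma> 0})"
    then obtain x where x: "x \<in> \<Gamma>" "x \<noteq> \<gamma> 0" "y = h x" by blast
    then have "h x \<noteq> h (\<gamma> 0)" using inj_onD[OF bij_betw_imp_inj_on[OF bij] _ x(1) start_point(1)] by blast
    then show "y \<in> \<Gamma> - {h (\<gamma> 0)}" using x(3) h_in[OF x(1)] by simp
  qed
  have "continuous_on {0<..<1} (\<lambda>u. h (\<gamma> u))"
    by (rule continuous_on_compose2[OF cont path]) (use in1 in blast)
  moreover have "(\<lambda>u. h (\<gamma> u)) ` {0<..<1} \<subseteq> \<Gamma> - {h (\<gamma> 0)}" using in1 in2 by blast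
  ultimately have "continuous_on {0<..<1} (\<lambda>u. loop_chart (P (h (\<gamma> 0))) (h (\<gamma> u)))"
    by (rule continuous_on_compose2[OF loop_chart_continuous[OF loop h_in[OF start_point(1)]]])
  then show ?thesis by (simp add: transfer_def[abs_def] target_cut_def)
qed

lemma transfer_inj: "inj_on transfer {0<..<1}"
proof (rule inj_onI)
  fix u v assume uv: "u \<in> {0<..<1}" "v \<in> {0<..<1}" "transfer u = transfer v"
  then have "h (\<gamma> u) = h (\<gamma> v)"
    using loop_chart_section[OF loop target_cut_param(1) h_in[OF path_interior_point(1)]] unfolding transfer_def by metis
  then have "\<gamma> u = \<gamma> v"
    using inj_onD[OF bij_betw_imp_inj_on[OF bij] _ path_interior_point(1)[OF uv(1)] path_interior_point(1)[OF uv(2)]]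
    by blast
  then show "u = v" using path_interior_point(3) uv by metis
qed

lemma transfer_surj:
  assumes y: "y \<in> {0<..<1}"
  obtains u where "u \<in> {0<..<1}" "transfer u = y"
proof -
  define x where "x = shiftpath target_cut \<gamma> y"
  have "target_cut \<in> {0..1}" "y \<in> {0..1}" using target_cut_param(1) y by auto
  then have x: "x \<in> \<Gamma>" "loop_chart target_cut x = y"
    using shiftpath_image[OF loop] loop_chart_shiftpath[OF loop target_cut_param(1), of y] y
    unfolding x_def by (blast, simp)
  define w where "w = inv_into \<Gamma> h x"
  have w: "w \<in> \<Gamma>" "h w = x"
    using bij_betw_apply[OF bij_betw_inv_into[OF bij] x(1)] bij_betw_inv_into_right[OF bij x(1)]
    by (simp_all add: w_def)
  have "x \<noteq> h (\<gamma> 0)"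
    using loop_chart_eq_0_iff[OF loop h_in[OF start_point(1)] x(1)] x(2) y by (auto simp: target_cut_def)
  then have "w \<noteq> \<gamma> 0" using w(2) by blast
  then have "P w \<noteq> 0" using param_inj[OF w(1) start_point(1)] start_point(2) by auto
  then have "P w \<in> {0<..<1}" using param_section_loop[OF loop w(1)] by auto
  moreover have "transfer (P w) = y" using loop_chart_image[OF w(1)] w(2) x(2) by simp
  ultimately show ?thesis by (rule that)
qed

lemma transfer_mono_imp_orient_pres:
  assumes mono: "\<forall>u\<in>{0<..<1}. \<forall>v\<in>{0<..<1}. u < v \<longrightarrow> transfer u < transfer v"
  shows "orient_pres \<gamma> h"
  unfolding orient_pres_def
proof (intro ballI impI)
  fix x y z assume xyz: "x \<in> \<Gamma>" "y \<in> \<Gamma>" "z \<in> \<Gamma>" and c: "cyc_pos (P x) (P y) (P z)"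
  have "cyc_pos (transfer (P x)) (transfer (P y)) (transfer (P z))"
  proof (rule cyc_pos_strict_mono_fixing_0[of transfer, OF transfer_0 transfer_in])
    show "transfer u < transfer v" if "u \<in> {0<..<1}" "v \<in> {0<..<1}" "u < v" for u v
      using mono that by blast
  qed (use param_section_loop[OF loop] xyz c in auto)
  then show "cyc_pos (P (h x)) (P (h y)) (P (h z))"
    using cyc_pos_rot_iff[OF target_cut_param(1)] param_section_loop[OF loop h_in] xyz
    by (simp add: loop_chart_image[symmetric] loop_chart_def)
qed

lemma transfer_antimono_imp_orient_rev:
  assumes anti: "\<forall>u\<in>{0<..<1}. \<forall>v\<in>{0<..<1}. u < v \<longrightarrow> transfer v < transfer u"
  shows "orient_rev \<gamma> h"
  unfolding orient_rev_def
proof (intro ballI impI)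
  fix x y z assume xyz: "x \<in> \<Gamma>" "y \<in> \<Gamma>" "z \<in> \<Gamma>" and c: "cyc_pos (P x) (P y) (P z)"
  have "cyc_pos (transfer (P z)) (transfer (P y)) (transfer (P x))"
  proof (rule cyc_pos_strict_antimono_fixing_0[of transfer, OF transfer_0 transfer_in])
    show "transfer v < transfer u" if "u \<in> {0<..<1}" "v \<in> {0<..<1}" "u < v" for u v
      using anti that by blast
  qed (use param_section_loop[OF loop] xyz c in auto)
  then show "cyc_pos (P (h z)) (P (h y)) (P (h x))"
    using cyc_pos_rot_iff[OF target_cut_param(1)] param_section_loop[OF loop h_in] xyz
    by (simp add: loop_chart_image[symmetric] loop_chart_def)
qed

text \<open>A fixed point \<open>\<gamma> u\<close> with \<open>u > target_cut\<close> is a zero of \<open>u - transfer u - target_cut\<close>.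
  This function is negative at \<open>target_cut / 2\<close> and, \<open>transfer\<close> being decreasing and onto, nonnegative near \<open>1\<close>.\<close>

lemma transfer_antimono_imp_fixed_point:
  assumes anti: "\<forall>u\<in>{0<..<1}. \<forall>v\<in>{0<..<1}. u < v \<longrightarrow> transfer v < transfer u"
  shows "\<exists>\<tau>\<in>\<Gamma>. h \<tau> = \<tau>"
proof (cases "target_cut = 0")
  case True
  then have "h (\<gamma> 0) = \<gamma> 0" using target_cut_param(2) by simp
  then show ?thesis using start_point(1) by blast
next
  case False
  then have d: "0 < target_cut" "target_cut < 1" using target_cut_param(1) by auto
  define \<psi> where "\<psi> u = u - transfer u - target_cut" for u
  define a where "a = target_cut / 2"
  have a: "a \<in> {0<..<1}" "\<psi> a < 0" using d transfer_in[of a] by (auto simp: \<psi>_def a_def)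
  obtain b0 where b0: "b0 \<in> {0<..<1}" "transfer b0 = (1 - target_cut) / 2"
    using transfer_surj[of "(1 - target_cut) / 2"] d by auto
  define b where "b = max b0 ((1 + target_cut) / 2)"
  have b_ge: "(1 + target_cut) / 2 \<le> b" "b0 \<le> b" by (simp_all add: b_def)
  have b: "b \<in> {0<..<1}" "a < b"
    using b0(1) d b_ge(1) by (auto simp: a_def b_def less_max_iff_disj)
  have "transfer b \<le> transfer b0"
  proof (cases "b0 = b")
    case False
    then have "b0 < b" using b_ge(2) by simp
    then show ?thesis using anti b0(1) b(1) by (simp add: less_imp_le)
  qed simp
  then have "0 \<le> \<psi> b" using b0(2) b_ge(1) unfolding \<psi>_def by (simp add: field_simps)
  moreover have "continuous_on {a..b} \<psi>"
    using a(1) b(1) unfolding \<psi>_def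
    by (intro continuous_intros continuous_on_subset[OF transfer_continuous]) auto
  ultimately obtain u where u: "a \<le> u" "u \<le> b" "\<psi> u = 0"
    using IVT'[of \<psi> a 0 b] a(2) b(2) by auto
  then have u01: "u \<in> {0<..<1}" using a(1) b(1) by auto
  have "rot target_cut (P (h (\<gamma> u))) = u - target_cut"
    using u(3) by (simp add: \<psi>_def transfer_def loop_chart_def)
  moreover have "P (h (\<gamma> u)) \<in> {0..<1}"
    using param_section_loop[OF loop h_in[OF path_interior_point(1)[OF u01]]] by simp
  ultimately have "P (h (\<gamma> u)) = u" using u01 unfolding rot_def by (auto split: if_splits)
  then have "h (\<gamma> u) = \<gamma> u"
    using param_section_loop[OF loop h_in[OF path_interior_point(1)[OF u01]]] by simp
  then show ?thesis using path_interior_point(1)[OF u01] by blast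
qed

lemma orient_pres_or_rev_with_fixed_point:
  "orient_pres \<gamma> h \<or> (orient_rev \<gamma> h \<and> (\<exists>\<tau>\<in>\<Gamma>. h \<tau> = \<tau>))"
  using continuous_inj_on_interval_strict_mono[OF is_interval_oo transfer_continuous transfer_inj]
proof (elim disjE)
  assume "\<forall>u\<in>{0<..<1}. \<forall>v\<in>{0<..<1}. u < v \<longrightarrow> transfer u < transfer v"
  then show ?thesis using transfer_mono_imp_orient_pres by blast
next
  assume "\<forall>u\<in>{0<..<1}. \<forall>v\<in>{0<..<1}. u < v \<longrightarrow> transfer v < transfer u"
  then show ?thesis using transfer_antimono_imp_orient_rev transfer_antimono_imp_fixed_point by blast
qed

end

section \<open>Dynamics of the diffeomorphism and the functions \<open>\<eta>_i\<close>\<close>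

lemma prod_lessThan_shift_periodic:
  fixes g :: "nat \<Rightarrow> 'a::comm_monoid_mult"
  assumes "g m = g 0"
  shows "(\<Prod>i<m. g (Suc i)) = (\<Prod>i<m. g i)"
proof (cases m)
  case (Suc n)
  have "(\<Prod>i<m. g (Suc i)) = (\<Prod>i<n. g (Suc i)) * g m"
    unfolding Suc by (rule prod.lessThan_Suc)
  also have "\<dots> = g 0 * (\<Prod>i<n. g (Suc i))" using assms by (simp add: mult.commute)
  also have "\<dots> = (\<Prod>i<m. g i)"
    unfolding Suc by (rule prod.lessThan_Suc_shift[symmetric])
  finally show ?thesis .
qed simp

locale curve_diffeo_dynamics = simple_curve \<gamma> + self_bijection "path_image \<gamma>" \<alpha>
  for \<gamma> :: "real \<Rightarrow> complex" and \<alpha> +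
  assumes alpha_diff: "curve_diff1 (path_image \<gamma>) \<alpha>"
    and inv_diff: "curve_diff1 (path_image \<gamma>) (inv_into (path_image \<gamma>) \<alpha>)"
    and periodic: "\<exists>t. periodic_point (path_image \<gamma>) \<alpha> t"
begin

abbreviation "\<alpha>' \<equiv> curve_deriv \<Gamma> \<alpha>"
abbreviation "m \<equiv> mult \<gamma> \<alpha>"

lemma alpha_has_deriv: "t \<in> \<Gamma> \<Longrightarrow> (\<alpha> has_field_derivative \<alpha>' t) (at t within \<Gamma>)"
  using alpha_diff by (simp add: curve_diff1_def)

lemma alpha_continuous: "continuous_on \<Gamma> \<alpha>"
  by (rule DERIV_continuous_on[OF alpha_has_deriv])

lemma inv_continuous: "continuous_on \<Gamma> \<iota>"
  using inv_diff unfolding curve_diff1_def by (meson DERIV_continuous_on)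

lemma funpow_continuous:
  assumes "continuous_on \<Gamma> f" "\<And>x. x \<in> \<Gamma> \<Longrightarrow> f x \<in> \<Gamma>"
  shows "continuous_on \<Gamma> (f ^^ n)"
proof (induction n)
  case (Suc n)
  have "(f ^^ n) x \<in> \<Gamma>" if "x \<in> \<Gamma>" for x using that by (induction n) (auto intro: assms(2))
  then have "continuous_on \<Gamma> (\<lambda>x. f ((f ^^ n) x))"
    by (intro continuous_on_compose2[OF assms(1) Suc.IH]) auto
  then show ?case by (simp add: o_def)
qed (simp add: continuous_on_id)

lemma funpow_alpha_continuous: "continuous_on \<Gamma> (\<alpha> ^^ n)"
  by (rule funpow_continuous[OF alpha_continuous alpha_in])

lemma funpow_inv_continuous: "continuous_on \<Gamma> (\<iota> ^^ n)"
  by (rule funpow_continuous[OF inv_continuous inv_in])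

lemma iter_continuous: "continuous_on \<Gamma> (iter \<Gamma> \<alpha> k)"
  unfolding iter_def using funpow_alpha_continuous funpow_inv_continuous by simp

lemma curve_deriv_eqI:
  assumes "t \<in> \<Gamma>" "(f has_field_derivative D) (at t within \<Gamma>)"
  shows "curve_deriv \<Gamma> f t = D"
proof -
  have nontrivial: "\<not> trivial_limit (at t within \<Gamma>)"
    using curve_limit_point[OF assms(1)] trivial_limit_within by blast
  show ?thesis unfolding curve_deriv_def
  proof (rule the_equality)
    fix E assume "(f has_field_derivative E) (at t within \<Gamma>)"
    then show "E = D"
      using assms(2) nontrivial tendsto_unique unfolding has_field_derivative_iff by blast
  qed (rule assms(2))
qed

lemma funpow_has_deriv:
  assumes "t \<in> \<Gamma>"
  shows "((\<alpha> ^^ n) has_field_derivative (\<Prod>j<n. \<alpha>' ((\<alpha> ^^ j) t))) (at t within \<Gamma>)"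
proof (induction n)
  case (Suc n)
  have "(\<alpha> has_field_derivative \<alpha>' ((\<alpha> ^^ n) t)) (at ((\<alpha> ^^ n) t) within ((\<alpha> ^^ n) ` \<Gamma>))"
    by (rule DERIV_subset[OF alpha_has_deriv]) (use funpow_alpha_in assms in auto)
  from DERIV_image_chain[OF this Suc.IH]
  show ?case by (simp add: mult.commute o_def)
qed (simp add: DERIV_ident id_def)

definition orbit_prod :: "(complex \<Rightarrow> complex) \<Rightarrow> complex \<Rightarrow> complex" where
  "orbit_prod f t = (\<Prod>j<m. f ((\<alpha> ^^ j) t))"

lemma orbit_prod_continuous: "continuous_on \<Gamma> f \<Longrightarrow> continuous_on \<Gamma> (orbit_prod f)"
  unfolding orbit_prod_def
  by (intro continuous_on_prod continuous_on_compose2[OF _ funpow_alpha_continuous])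
     (auto intro: funpow_alpha_in)

lemma orbit_prod_alpha_fixed:
  assumes "(\<alpha> ^^ m) \<tau> = \<tau>"
  shows "orbit_prod f (\<alpha> \<tau>) = orbit_prod f \<tau>"
proof -
  have "(\<alpha> ^^ j) (\<alpha> \<tau>) = (\<alpha> ^^ Suc j) \<tau>" for j by (simp add: funpow_swap1)
  then show ?thesis unfolding orbit_prod_def
    using prod_lessThan_shift_periodic[where g = "\<lambda>j. f ((\<alpha> ^^ j) \<tau>)"] assms by simp
qed

lemma orbit_prod_deriv_nonzero: "t \<in> \<Gamma> \<Longrightarrow> orbit_prod \<alpha>' t \<noteq> 0"
  using alpha_diff funpow_alpha_in by (simp add: orbit_prod_def curve_diff1_def)

lemma eta_on_curve:
  assumes "t \<in> \<Gamma>"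
  shows "eta \<gamma> \<alpha> a b aX bX i t =
    (let D = norm (orbit_prod \<alpha>' t)
     in norm (orbit_prod a t) - norm (orbit_prod b t) *
          (if i = 0 then min (D powr (- aX)) (D powr (- bX)) else max (D powr (- aX)) (D powr (- bX))))"
  using curve_deriv_eqI[OF assms funpow_has_deriv[OF assms]]
  by (simp add: eta_def fm_def orbit_prod_def iter_nat)

lemma eta_continuous:
  assumes "continuous_on \<Gamma> a" "continuous_on \<Gamma> b"
  shows "continuous_on \<Gamma> (eta \<gamma> \<alpha> a b aX bX i)"
proof -
  have "continuous_on \<Gamma> \<alpha>'" using alpha_diff by (simp add: curve_diff1_def)
  then have "continuous_on \<Gamma> (\<lambda>t. norm (orbit_prod \<alpha>' t))"
    by (intro continuous_on_norm orbit_prod_continuous)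
  then have weight: "continuous_on \<Gamma> (\<lambda>t. norm (orbit_prod \<alpha>' t) powr (- c))" for c
    by (rule continuous_on_powr[OF _ continuous_on_const]) (simp add: orbit_prod_deriv_nonzero)
  have ab: "continuous_on \<Gamma> (\<lambda>t. norm (orbit_prod a t))" "continuous_on \<Gamma> (\<lambda>t. norm (orbit_prod b t))"
    using assms by (simp_all add: continuous_on_norm orbit_prod_continuous)
  let ?D = "\<lambda>t. norm (orbit_prod \<alpha>' t)"
  have "continuous_on \<Gamma> (\<lambda>t. norm (orbit_prod a t) - norm (orbit_prod b t) *
      min (?D t powr (- aX)) (?D t powr (- bX)))"
    "continuous_on \<Gamma> (\<lambda>t. norm (orbit_prod a t) - norm (orbit_prod b t) *
      max (?D t powr (- aX)) (?D t powr (- bX)))"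
    by (intro continuous_on_diff continuous_on_mult continuous_on_min continuous_on_max ab weight)+
  then have "continuous_on \<Gamma> (\<lambda>t. let D = ?D t
     in norm (orbit_prod a t) - norm (orbit_prod b t) *
          (if i = 0 then min (D powr (- aX)) (D powr (- bX)) else max (D powr (- aX)) (D powr (- bX))))"
    by (cases "i = 0") (simp_all only: Let_def if_True if_False simp_thms)
  then show ?thesis by (rule continuous_on_cong[THEN iffD1, rotated 2]) (simp_all add: eta_on_curve)
qed

lemma eta_iter_fixed:
  assumes \<tau>: "\<tau> \<in> \<Gamma>" "(\<alpha> ^^ m) \<tau> = \<tau>"
  shows "eta \<gamma> \<alpha> a b aX bX i (iter \<Gamma> \<alpha> k \<tau>) = eta \<gamma> \<alpha> a b aX bX i \<tau>"
proof -
  let ?\<eta> = "eta \<gamma> \<alpha> a b aX bX i"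
  have alpha_fixed: "?\<eta> (\<alpha> \<sigma>) = ?\<eta> \<sigma>" if "\<sigma> \<in> \<Gamma>" "(\<alpha> ^^ m) \<sigma> = \<sigma>" for \<sigma>
    using that by (simp add: eta_on_curve alpha_in orbit_prod_alpha_fixed)
  show ?thesis
  proof (induction k rule: int_induct[where k = 0])
    case base
    then show ?case by (simp add: iter_0)
  next
    case (step1 j)
    then show ?case
      using alpha_fixed[OF iter_in[OF \<tau>(1)] iter_preserves_fixed_point[OF \<tau>]] by (simp add: iter_succ[OF \<tau>(1)])
  next
    case (step2 j)
    have "\<iota> (iter \<Gamma> \<alpha> j \<tau>) = iter \<Gamma> \<alpha> (j - 1) \<tau>" by (simp add: iter_pred[OF \<tau>(1)])
    then have "?\<eta> (\<alpha> (iter \<Gamma> \<alpha> (j - 1) \<tau>)) = ?\<eta> (iter \<Gamma> \<alpha> (j - 1) \<tau>)"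
      using alpha_fixed[OF iter_in[OF \<tau>(1)] iter_preserves_fixed_point[OF \<tau>]] by simp
    then show ?case using step2(2) iter_succ[OF \<tau>(1), of "j - 1"] by simp
  qed
qed

lemma mult_orient_pres:
  assumes "orient_pres \<gamma> \<alpha>"
  shows "0 < m \<and> (\<exists>\<tau>\<in>\<Gamma>. (\<alpha> ^^ m) \<tau> = \<tau>)"
proof -
  obtain t n where "t \<in> \<Gamma>" "0 < n" "(\<alpha> ^^ n) t = t"
    using periodic by (auto simp: periodic_point_def)
  then have "\<exists>n. 0 < n \<and> (\<exists>t\<in>\<Gamma>. (\<alpha> ^^ n) t = t)" by blast
  from LeastI_ex[OF this] show ?thesis using assms by (simp add: mult_def)
qed

lemma mult_pos: "0 < m"
  using mult_orient_pres by (cases "orient_pres \<gamma> \<alpha>") (auto simp: mult_def)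

lemma funpow_inv_fixed_iff: "\<tau> \<in> \<Gamma> \<Longrightarrow> (\<iota> ^^ n) \<tau> = \<tau> \<longleftrightarrow> (\<alpha> ^^ n) \<tau> = \<tau>"
  using iter_neg_cancel[of \<tau> "int n"] iter_neg_cancel[of \<tau> "- int n"]
  by (auto simp: iter_nat iter_neg_nat)

text \<open>The choice of \<open>m\<close> makes \<open>\<alpha>_m\<close> orientation preserving with a fixed point: for an
  orientation reversing \<open>\<alpha>\<close> the square preserves orientation, and on a closed curve \<open>\<alpha>\<close>
  itself has a fixed point.\<close>

lemma arc_iterate_param_mono:
  assumes arc: "\<not> loop"
  shows "param_mono (\<alpha> ^^ m) \<and> param_mono (\<iota> ^^ m)"
proof (cases "orient_pres \<gamma> \<alpha>")
  case True
  then have "param_mono \<alpha>"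
    using arc_param_mono_or_antimono[OF arc bij alpha_continuous] arc_orient_pres_not_param_antimono[OF arc]
    by blast
  then show ?thesis
    using param_mono_funpow param_mono_inv_into[OF bij] alpha_in inv_in by blast
next
  case False
  then have "m = 2" by (simp add: mult_def)
  have "\<not> param_mono \<alpha>" using False param_mono_imp_orient_pres by blast
  then have "param_antimono \<alpha>" using arc_param_mono_or_antimono[OF arc bij alpha_continuous] by blast
  then show ?thesis
    using \<open>m = 2\<close> param_antimono_square param_antimono_inv_into[OF bij] alpha_in inv_in by metis
qed

lemma loop_iterate_orient_pres:
  assumes loop: "loop"
  shows "orient_pres \<gamma> (\<alpha> ^^ m) \<and> orient_pres \<gamma> (\<iota> ^^ m) \<and> (\<exists>\<tau>\<in>\<Gamma>. (\<alpha> ^^ m) \<tau> = \<tau>)"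
proof (cases "orient_pres \<gamma> \<alpha>")
  case True
  then show ?thesis
    using orient_pres_funpow orient_pres_inv_into[OF bij] mult_orient_pres alpha_in inv_in by blast
next
  case False
  then have "m = 2" by (simp add: mult_def)
  interpret loop_homeomorphism \<gamma> \<alpha>
    by unfold_locales (use loop bij alpha_continuous in auto)
  obtain \<tau> where rev: "orient_rev \<gamma> \<alpha>" and \<tau>: "\<tau> \<in> \<Gamma>" "\<alpha> \<tau> = \<tau>"
    using orient_pres_or_rev_with_fixed_point False by blast
  have "orient_pres \<gamma> (\<lambda>x. \<alpha> (\<alpha> x))" "orient_pres \<gamma> (\<lambda>x. \<iota> (\<iota> x))"
    using orient_rev_comp rev orient_rev_inv_into[OF bij rev] alpha_in inv_in by blast+
  moreover have "(\<alpha> ^^ 2) \<tau> = \<tau>" using \<tau> by (simp add: numeral_2_eq_2)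
  ultimately show ?thesis using \<open>m = 2\<close> \<tau>(1) by (auto simp: numeral_2_eq_2 o_def)
qed

lemma iterate_orbits_converge:
  assumes t: "t \<in> \<Gamma>"
  shows "\<exists>L\<in>\<Gamma>. ((\<lambda>n. ((\<alpha> ^^ m) ^^ n) t) \<longlonglongrightarrow> L) \<and> (\<alpha> ^^ m) L = L"
    and "\<exists>L\<in>\<Gamma>. ((\<lambda>n. ((\<iota> ^^ m) ^^ n) t) \<longlonglongrightarrow> L) \<and> (\<alpha> ^^ m) L = L"
proof -
  note maps = funpow_alpha_in[of _ m] funpow_inv_in[of _ m]
  note conts = funpow_alpha_continuous[of m] funpow_inv_continuous[of m]
  have "(\<exists>L\<in>\<Gamma>. ((\<lambda>n. ((\<alpha> ^^ m) ^^ n) t) \<longlonglongrightarrow> L) \<and> (\<alpha> ^^ m) L = L) \<and>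
        (\<exists>L\<in>\<Gamma>. ((\<lambda>n. ((\<iota> ^^ m) ^^ n) t) \<longlonglongrightarrow> L) \<and> (\<iota> ^^ m) L = L)"
  proof (cases loop)
    case False
    then have "param_mono (\<alpha> ^^ m)" "param_mono (\<iota> ^^ m)" using arc_iterate_param_mono by blast+
    then show ?thesis
      using arc_orbit_converges[OF False maps(1) conts(1) _ t]
        arc_orbit_converges[OF False maps(2) conts(2) _ t] by blast
  next
    case True
    then obtain \<tau> where \<tau>: "\<tau> \<in> \<Gamma>" "(\<alpha> ^^ m) \<tau> = \<tau>" "(\<iota> ^^ m) \<tau> = \<tau>"
      using loop_iterate_orient_pres funpow_inv_fixed_iff by blast
    have "orient_pres \<gamma> (\<alpha> ^^ m)" "orient_pres \<gamma> (\<iota> ^^ m)"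
      using loop_iterate_orient_pres[OF True] by blast+
    then show ?thesis
      using loop_orbit_converges[OF True maps(1) conts(1) _ \<tau>(1,2) t]
        loop_orbit_converges[OF True maps(2) conts(2) _ \<tau>(1,3) t] by blast
  qed
  then show "\<exists>L\<in>\<Gamma>. ((\<lambda>n. ((\<alpha> ^^ m) ^^ n) t) \<longlonglongrightarrow> L) \<and> (\<alpha> ^^ m) L = L"
    and "\<exists>L\<in>\<Gamma>. ((\<lambda>n. ((\<iota> ^^ m) ^^ n) t) \<longlonglongrightarrow> L) \<and> (\<alpha> ^^ m) L = L"
    using funpow_inv_fixed_iff by blast+
qed

lemma eta_tendsto_along_orbit:
  assumes a: "continuous_on \<Gamma> a" and b: "continuous_on \<Gamma> b" and t: "t \<in> \<Gamma>"
    and L: "L \<in> \<Gamma>" "(\<alpha> ^^ m) L = L"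
    and X: "(X \<longlongrightarrow> L) F" "eventually (\<lambda>n. X n \<in> \<Gamma>) F"
    and orbit: "eventually (\<lambda>n. iter \<Gamma> \<alpha> (int m * n) t = X n) F"
  shows "((\<lambda>n. eta \<gamma> \<alpha> a b aX bX i (iter \<Gamma> \<alpha> (int m * n) (iter \<Gamma> \<alpha> k t)))
           \<longlongrightarrow> eta \<gamma> \<alpha> a b aX bX i L) F"
proof -
  let ?\<eta> = "eta \<gamma> \<alpha> a b aX bX i"
  have "((\<lambda>n. iter \<Gamma> \<alpha> k (X n)) \<longlongrightarrow> iter \<Gamma> \<alpha> k L) F"
    by (rule continuous_on_tendsto_compose[OF iter_continuous X(1) L(1) X(2)])
  moreover have "eventually (\<lambda>n. iter \<Gamma> \<alpha> k (X n) \<in> \<Gamma>) F"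
    using X(2) by eventually_elim (rule iter_in)
  ultimately have "((\<lambda>n. ?\<eta> (iter \<Gamma> \<alpha> k (X n))) \<longlongrightarrow> ?\<eta> (iter \<Gamma> \<alpha> k L)) F"
    by (rule continuous_on_tendsto_compose[OF eta_continuous[OF a b] _ iter_in[OF L(1)]])
  moreover have "eventually (\<lambda>n. ?\<eta> (iter \<Gamma> \<alpha> k (X n)) =
      ?\<eta> (iter \<Gamma> \<alpha> (int m * n) (iter \<Gamma> \<alpha> k t))) F"
    using orbit by eventually_elim (simp add: iter_commute[OF t])
  ultimately show ?thesis
    using eta_iter_fixed[OF L] by (simp add: Lim_transform_eventually)
qed

lemma eta_plus_iter:
  assumes a: "continuous_on \<Gamma> a" and b: "continuous_on \<Gamma> b" and t: "t \<in> \<Gamma>"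
  shows "eta_plus \<gamma> \<alpha> a b aX bX i (iter \<Gamma> \<alpha> k t) = eta_plus \<gamma> \<alpha> a b aX bX i t"
proof -
  obtain L where L: "L \<in> \<Gamma>" "(\<lambda>n. ((\<alpha> ^^ m) ^^ n) t) \<longlonglongrightarrow> L" "(\<alpha> ^^ m) L = L"
    using iterate_orbits_converge(1)[OF t] by blast
  define X where "X = (\<lambda>n::int. ((\<alpha> ^^ m) ^^ nat n) t)"
  have X: "(X \<longlongrightarrow> L) at_top" "eventually (\<lambda>n. X n \<in> \<Gamma>) at_top"
    using filterlim_compose[OF L(2) filterlim_nat_sequentially] funpow_alpha_in[OF t]
    by (simp_all add: X_def funpow_mult)
  have "eventually (\<lambda>n. iter \<Gamma> \<alpha> (int m * n) t = X n) at_top"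
    using eventually_ge_at_top[of "0::int"] by eventually_elim (simp add: X_def iter_mult_nonneg)
  note lim = eta_tendsto_along_orbit[OF a b t L(1,3) X this]
  have "\<not> trivial_limit (at_top :: int filter)" by simp
  from tendsto_Lim[OF this lim[where k = k]] tendsto_Lim[OF this lim[where k = 0]]
  show ?thesis unfolding eta_plus_def iter_0 by (rule trans[OF _ sym])
qed

lemma eta_minus_iter:
  assumes a: "continuous_on \<Gamma> a" and b: "continuous_on \<Gamma> b" and t: "t \<in> \<Gamma>"
  shows "eta_minus \<gamma> \<alpha> a b aX bX i (iter \<Gamma> \<alpha> k t) = eta_minus \<gamma> \<alpha> a b aX bX i t"
proof -
  obtain L where L: "L \<in> \<Gamma>" "(\<lambda>n. ((\<iota> ^^ m) ^^ n) t) \<longlonglongrightarrow> L" "(\<alpha> ^^ m) L = L"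
    using iterate_orbits_converge(2)[OF t] by blast
  define X where "X = (\<lambda>n::int. ((\<iota> ^^ m) ^^ nat (- n)) t)"
  have "filterlim (\<lambda>n::int. nat (- n)) sequentially at_bot"
    using filterlim_nat_sequentially unfolding filterlim_def at_bot_mirror filtermap_filtermap by simp
  then have X: "(X \<longlongrightarrow> L) at_bot" "eventually (\<lambda>n. X n \<in> \<Gamma>) at_bot"
    using filterlim_compose[OF L(2)] funpow_inv_in[OF t]
    by (simp_all add: X_def funpow_mult)
  have "eventually (\<lambda>n. iter \<Gamma> \<alpha> (int m * n) t = X n) at_bot"
    using eventually_le_at_bot[of "0::int"] by eventually_elim (simp add: X_def iter_mult_nonpos mult_pos)
  note lim = eta_tendsto_along_orbit[OF a b t L(1,3) X this]
  have "\<not> trivial_limit (at_bot :: int filter)" by simp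
  from tendsto_Lim[OF this lim[where k = k]] tendsto_Lim[OF this lim[where k = 0]]
  show ?thesis unfolding eta_minus_def iter_0 by (rule trans[OF _ sym])
qed

lemma Phi_subset: "Phi \<gamma> \<alpha> \<subseteq> \<Gamma>"
  unfolding Phi_def by (rule closure_minimal[OF _ closed_curve]) blast

lemma Phi_iter: "x \<in> Phi \<gamma> \<alpha> \<Longrightarrow> iter \<Gamma> \<alpha> k x \<in> Phi \<gamma> \<alpha>"
proof -
  assume x: "x \<in> Phi \<gamma> \<alpha>"
  define S where "S = {t \<in> \<Gamma>. iter \<Gamma> \<alpha> (int m) t \<noteq> t}"
  have "closure S \<subseteq> \<Gamma>" unfolding S_def by (rule closure_minimal[OF _ closed_curve]) blast
  moreover have "iter \<Gamma> \<alpha> k ` S \<subseteq> S"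
    using iter_commute iter_in inj_on_eq_iff[OF iter_inj_on] by (fastforce simp: S_def)
  ultimately have "iter \<Gamma> \<alpha> k ` closure S \<subseteq> closure S"
    by (intro image_closure_subset continuous_on_subset[OF iter_continuous] closed_closure)
       (use closure_subset in blast)+
  then show ?thesis using x by (auto simp: Phi_def S_def)
qed

lemma Phi_iter_iff: "x \<in> \<Gamma> \<Longrightarrow> iter \<Gamma> \<alpha> k x \<in> Phi \<gamma> \<alpha> \<longleftrightarrow> x \<in> Phi \<gamma> \<alpha>"
  using Phi_iter[of "iter \<Gamma> \<alpha> k x" "- k"] Phi_iter[of x k] iter_neg_cancel[of x k] by auto

lemma Gamma_set_iter_iff:
  assumes a: "continuous_on \<Gamma> a" and b: "continuous_on \<Gamma> b" and x: "x \<in> \<Gamma>"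
  shows "iter \<Gamma> \<alpha> k x \<in> Gamma_set \<gamma> \<alpha> a b aX bX j \<longleftrightarrow> x \<in> Gamma_set \<gamma> \<alpha> a b aX bX j"
  using iter_in[OF x] x
  by (simp add: Gamma_set_def Let_def Phi_iter_iff eta_plus_iter[OF a b x] eta_minus_iter[OF a b x])

lemma Gamma_set_iter:
  assumes a: "continuous_on \<Gamma> a" and b: "continuous_on \<Gamma> b"
  shows "iter \<Gamma> \<alpha> k ` Gamma_set \<gamma> \<alpha> a b aX bX j = Gamma_set \<gamma> \<alpha> a b aX bX j"
proof (rule iter_image_invariant)
  show sub: "Gamma_set \<gamma> \<alpha> a b aX bX j \<subseteq> \<Gamma>"
    using Phi_subset by (auto simp: Gamma_set_def Let_def)
  show "iter \<Gamma> \<alpha> k x \<in> Gamma_set \<gamma> \<alpha> a b aX bX j"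
    if "x \<in> Gamma_set \<gamma> \<alpha> a b aX bX j" for k x
    using that Gamma_set_iter_iff[OF a b] sub by blast
qed

end

theorem corollary5p2:
  fixes \<gamma> :: "real \<Rightarrow> complex" and \<alpha> a b :: "complex \<Rightarrow> complex" and aX bX :: real
  assumes "smooth_jordan_curve \<gamma>"
    and "curve_diffeo (path_image \<gamma>) \<alpha>"
    and "\<exists>t. periodic_point (path_image \<gamma>) \<alpha> t"
    and "0 \<le> aX" "aX \<le> bX" "bX \<le> 1"
    and "continuous_on (path_image \<gamma>) a" "continuous_on (path_image \<gamma>) b"
  shows "(\<forall>i\<in>{0,1}. \<forall>k::int. \<forall>t\<in>path_image \<gamma>.
            eta_minus \<gamma> \<alpha> a b aX bX i t = eta_minus \<gamma> \<alpha> a b aX bX i (iter (path_image \<gamma>) \<alpha> k t) \<and>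
            eta_plus \<gamma> \<alpha> a b aX bX i t = eta_plus \<gamma> \<alpha> a b aX bX i (iter (path_image \<gamma>) \<alpha> k t))
       \<and> (\<forall>j\<in>{1..5}. \<forall>k::int. iter (path_image \<gamma>) \<alpha> k ` Gamma_set \<gamma> \<alpha> a b aX bX j = Gamma_set \<gamma> \<alpha> a b aX bX j)"
proof -
  interpret curve_diffeo_dynamics \<gamma> \<alpha>
    using assms(1-3) by unfold_locales (auto simp: smooth_jordan_curve_def curve_diffeo_def)
  show ?thesis
    using eta_minus_iter[OF assms(7,8)] eta_plus_iter[OF assms(7,8)] Gamma_set_iter[OF assms(7,8)]
    by simp
qed

end
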